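(* None of the following real Lie algebras arises as a contraction of a semisimple Lie algebra: $L_{8,3}$, $L_{8,4}^p$ with $p\neq0$, $L_{8,16}$, $L_{8,17}^p$ with $p\neq-1$, $L_{8,18}^p$ with $p\neq0$. Here, on a basis $X_1,\dots,X_8$ with $[X_i,X_j]=\sum_kC_{ij}^kX_k$ and listing only nonzero $C_{ij}^k$ with $i<j$: (A) denotes $C_{23}^1=1,C_{12}^3=1,C_{13}^2=-1,C_{14}^7=\tfrac12,C_{15}^6=\tfrac12,C_{16}^5=-\tfrac12,C_{17}^4=-\tfrac12,C_{24}^5=\tfrac12,C_{25}^4=-\tfrac12,C_{26}^7=\tfrac12,C_{27}^6=-\tfrac12,C_{34}^6=\tfrac12,C_{35}^7=-\tfrac12,C_{36}^4=-\tfrac12,C_{37}^5=\tfrac12$; (B) denotes $C_{12}^2=2,C_{13}^3=-2,C_{23}^1=1,C_{14}^4=1,C_{15}^5=-1,C_{25}^4=1,C_{34}^5=1,C_{16}^6=1,C_{17}^7=-1,C_{27}^6=1,C_{36}^7=1$; and $L_{8,3}$: (A) and $C_{48}^4=C_{58}^5=C_{68}^6=C_{78}^7=1$; $L_{8,4}^p$ ($p\in\mathbb{R}$): (A) and $C_{48}^4=C_{58}^5=C_{68}^6=C_{78}^7=p$, $C_{48}^6=-1,C_{58}^7=-1,C_{68}^4=1,C_{78}^5=1$; $L_{8,16}$: (B) and $C_{48}^4=1,C_{58}^5=1,C_{68}^4=1,C_{68}^6=1,C_{78}^5=1,C_{78}^7=1$; $L_{8,17}^p$ ($p\in\mathbb{R}$):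 (B) and $C_{48}^4=1,C_{58}^5=1,C_{68}^6=p,C_{78}^7=p$; $L_{8,18}^p$ ($p\in\mathbb{R}$): (B) and $C_{48}^4=p,C_{48}^6=-1,C_{58}^5=p,C_{58}^7=-1,C_{68}^4=1,C_{68}^6=p,C_{78}^5=1,C_{78}^7=p$.
   Context: All Lie algebras are over $\mathbb{R}$. Unlisted brackets $[X_i,X_j]$, $i<j$, are zero; the others follow by antisymmetry. Contraction: for a Lie algebra $(V,[\cdot,\cdot])$ and nonsingular linear maps $\Phi_t$, $t\in[1,\infty)$, if $[X,Y]_\infty=\lim_{t\to\infty}\Phi_t^{-1}[\Phi_tX,\Phi_tY]$ exists for all $X,Y$, any Lie algebra isomorphic to $(V,[\cdot,\cdot]_\infty)$ is a contraction of $(V,[\cdot,\cdot])$. *)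

theory Defs
  imports "HOL-Analysis.Analysis"
begin

definition lie_algebra :: "('a::real_vector \<Rightarrow> 'a \<Rightarrow> 'a) \<Rightarrow> bool" where
  "lie_algebra B \<longleftrightarrow> bilinear B \<and> (\<forall>x. B x x = 0) \<and>
     (\<forall>x y z. B x (B y z) + B y (B z x) + B z (B x y) = 0)"

definition lie_ideal :: "('a::real_vector \<Rightarrow> 'a \<Rightarrow> 'a) \<Rightarrow> 'a set \<Rightarrow> bool" where
  "lie_ideal B I \<longleftrightarrow> subspace I \<and> (\<forall>x y. y \<in> I \<longrightarrow> B x y \<in> I)"

fun derived_series :: "('a::real_vector \<Rightarrow> 'a \<Rightarrow> 'a) \<Rightarrow> 'a set \<Rightarrow> nat \<Rightarrow> 'a set" where
  "derived_series B I 0 = I"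
| "derived_series B I (Suc k) =
     span {B x y | x y. x \<in> derived_series B I k \<and> y \<in> derived_series B I k}"

definition solvable_ideal :: "('a::real_vector \<Rightarrow> 'a \<Rightarrow> 'a) \<Rightarrow> 'a set \<Rightarrow> bool" where
  "solvable_ideal B I \<longleftrightarrow> lie_ideal B I \<and> (\<exists>k. derived_series B I k = {0})"

definition semisimple :: "('a::real_vector \<Rightarrow> 'a \<Rightarrow> 'a) \<Rightarrow> bool" where
  "semisimple B \<longleftrightarrow> lie_algebra B \<and> (\<exists>x::'a. x \<noteq> 0) \<and>
     (\<forall>I. solvable_ideal B I \<longrightarrow> I = {0})"

definition contraction_limit ::
  "('a::euclidean_space \<Rightarrow> 'a \<Rightarrow> 'a) \<Rightarrow> ('a \<Rightarrow> 'a \<Rightarrow> 'a) \<Rightarrow> bool" where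
  "contraction_limit B0 B1 \<longleftrightarrow>
     (\<exists>\<Phi> :: real \<Rightarrow> 'a \<Rightarrow> 'a.
        (\<forall>t\<ge>1. linear (\<Phi> t) \<and> bij (\<Phi> t)) \<and>
        (\<forall>X Y. ((\<lambda>t. inv (\<Phi> t) (B0 (\<Phi> t X) (\<Phi> t Y))) \<longlongrightarrow> B1 X Y) at_top))"

definition is_contraction_of ::
  "('b::real_vector \<Rightarrow> 'b \<Rightarrow> 'b) \<Rightarrow> ('a::euclidean_space \<Rightarrow> 'a \<Rightarrow> 'a) \<Rightarrow> bool" where
  "is_contraction_of L B0 \<longleftrightarrow>
     (\<exists>B1 (f :: 'a \<Rightarrow> 'b). contraction_limit B0 B1 \<and> linear f \<and> bij f \<and>
        (\<forall>X Y. f (B1 X Y) = L (f X) (f Y)))"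

definition idx8 :: "nat \<Rightarrow> 8" where "idx8 i = of_nat (i - 1)"

text \<open>Structure constants given as list of ((i,j,k), C_ij^k) with i<j.\<close>
definition sc :: "((nat \<times> nat \<times> nat) \<times> real) list \<Rightarrow> nat \<Rightarrow> nat \<Rightarrow> nat \<Rightarrow> real" where
  "sc l i j k = sum_list (map snd (filter (\<lambda>e. fst e = (i, j, k)) l))"

definition sc_full :: "((nat \<times> nat \<times> nat) \<times> real) list \<Rightarrow> nat \<Rightarrow> nat \<Rightarrow> nat \<Rightarrow> real" where
  "sc_full l i j k = (if i < j then sc l i j k else if j < i then - sc l j i k else 0)"

definition sc_bracket :: "((nat \<times> nat \<times> nat) \<times> real) list \<Rightarrow> real^8 \<Rightarrow> real^8 \<Rightarrow> real^8" where
  "sc_bracket l x y = (\<chi> m. \<Sum>i\<in>{1..8}. \<Sum>j\<in>{1..8}. \<Sum>k\<in>{1..8}.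
      (if idx8 k = m then x $ idx8 i * y $ idx8 j * sc_full l i j k else 0))"

definition constsA :: "((nat \<times> nat \<times> nat) \<times> real) list" where
  "constsA = [((2,3,1), 1), ((1,2,3), 1), ((1,3,2), -1),
              ((1,4,7), 1/2), ((1,5,6), 1/2), ((1,6,5), -1/2), ((1,7,4), -1/2),
              ((2,4,5), 1/2), ((2,5,4), -1/2), ((2,6,7), 1/2), ((2,7,6), -1/2),
              ((3,4,6), 1/2), ((3,5,7), -1/2), ((3,6,4), -1/2), ((3,7,5), 1/2)]"

definition constsB :: "((nat \<times> nat \<times> nat) \<times> real) list" where
  "constsB = [((1,2,2), 2), ((1,3,3), -2), ((2,3,1), 1),
              ((1,4,4), 1), ((1,5,5), -1), ((2,5,4), 1), ((3,4,5), 1),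
              ((1,6,6), 1), ((1,7,7), -1), ((2,7,6), 1), ((3,6,7), 1)]"

definition L8_3 :: "real^8 \<Rightarrow> real^8 \<Rightarrow> real^8" where
  "L8_3 = sc_bracket (constsA @ [((4,8,4), 1), ((5,8,5), 1), ((6,8,6), 1), ((7,8,7), 1)])"

definition L8_4 :: "real \<Rightarrow> real^8 \<Rightarrow> real^8 \<Rightarrow> real^8" where
  "L8_4 p = sc_bracket (constsA @ [((4,8,4), p), ((5,8,5), p), ((6,8,6), p), ((7,8,7), p),
      ((4,8,6), -1), ((5,8,7), -1), ((6,8,4), 1), ((7,8,5), 1)])"

definition L8_16 :: "real^8 \<Rightarrow> real^8 \<Rightarrow> real^8" where
  "L8_16 = sc_bracket (constsB @ [((4,8,4), 1), ((5,8,5), 1), ((6,8,4), 1), ((6,8,6), 1),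
      ((7,8,5), 1), ((7,8,7), 1)])"

definition L8_17 :: "real \<Rightarrow> real^8 \<Rightarrow> real^8 \<Rightarrow> real^8" where
  "L8_17 p = sc_bracket (constsB @ [((4,8,4), 1), ((5,8,5), 1), ((6,8,6), p), ((7,8,7), p)])"

definition L8_18 :: "real \<Rightarrow> real^8 \<Rightarrow> real^8 \<Rightarrow> real^8" where
  "L8_18 p = sc_bracket (constsB @ [((4,8,4), p), ((4,8,6), -1), ((5,8,5), p), ((5,8,7), -1),
      ((6,8,4), 1), ((6,8,6), p), ((7,8,5), 1), ((7,8,7), p)])"

end

theory Submission
  imports Defs "Jordan_Normal_Form.Jordan_Normal_Form_Existence"
begin

text \<open>
  Call a Lie algebra unimodular if \<open>tr ad x = 0\<close> for all \<open>x\<close>. Each listed algebra fails this at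
  \<open>X\<^sub>8\<close>: \<open>tr ad X\<^sub>8\<close> is \<open>-4\<close>, \<open>-4p\<close>, \<open>-4\<close>, \<open>-2 - 2p\<close> and \<open>-4p\<close> respectively. Unimodularity passes
  to isomorphic copies and to contractions, since
  \<open>tr (\<Phi>\<^sub>t\<inverse> \<circ> ad (\<Phi>\<^sub>t X) \<circ> \<Phi>\<^sub>t) = tr ad (\<Phi>\<^sub>t X) = 0\<close> and the trace is continuous in the bracket.
  So it suffices that semisimple Lie algebras are unimodular, which we show following Cartan.
  The brackets of the radical of the Killing form with the whole algebra span an ideal of
  ad-nilpotent elements (Cartan's criterion, proved with the Jordan normal form over \<open>\<complex>\<close>), which
  by Engel's theorem must vanish; so the radical is an abelian ideal, hence zero. The
  nondegenerate Killing form then represents the functional \<open>tr ad\<close> as \<open>\<kappa>(z, -)\<close>; as this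
  functional kills brackets, \<open>z\<close> is central, hence zero.
\<close>

section \<open>Lie algebras and Engel's theorem\<close>

lemma lie_algebra_bilinear: "lie_algebra B \<Longrightarrow> bilinear B"
  by (simp add: lie_algebra_def)

lemma lie_algebra_alternating: "lie_algebra B \<Longrightarrow> B x x = 0"
  by (simp add: lie_algebra_def)

lemma lie_algebra_antisym:
  assumes "lie_algebra B" shows "B x y = - B y x"
proof -
  have b: "bilinear B" and z: "\<And>x. B x x = 0"
    using lie_algebra_bilinear lie_algebra_alternating assms by blast+
  have "0 = B (x+y) (x+y)" using z by simp
  also have "\<dots> = B x x + B x y + B y x + B y y"
    by (simp add: bilinear_ladd[OF b] bilinear_radd[OF b])
  finally show ?thesis using z by (simp add: eq_neg_iff_add_eq_0)
qed

lemma lie_algebra_leibniz: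
  assumes "lie_algebra B" shows "B x (B y z) = B (B x y) z + B y (B x z)"
proof -
  have "B x (B y z) + B y (B z x) + B z (B x y) = 0"
    using assms by (simp add: lie_algebra_def)
  moreover have "B y (B z x) = - B y (B x z)"
    using lie_algebra_antisym[OF assms, of z x] bilinear_rneg[OF lie_algebra_bilinear[OF assms]]
    by metis
  moreover have "B z (B x y) = - B (B x y) z" using lie_algebra_antisym[OF assms] by metis
  ultimately show ?thesis by (simp add: algebra_simps eq_neg_iff_add_eq_0)
qed

lemma lie_algebra_linear_right: "lie_algebra B \<Longrightarrow> linear (B x)"
  by (simp add: lie_algebra_def bilinear_def)

lemma lie_algebra_linear_left: "lie_algebra B \<Longrightarrow> linear (\<lambda>x. B x y)"
  by (simp add: lie_algebra_def bilinear_def)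

lemma abelian_ideal_solvable:
  assumes "lie_ideal B I" "\<forall>x\<in>I. \<forall>y\<in>I. B x y = 0"
  shows "solvable_ideal B I"
proof -
  have "0 \<in> I" using assms(1) unfolding lie_ideal_def by (simp add: subspace_0)
  hence "{B x y | x y. x \<in> I \<and> y \<in> I} = {0}" using assms(2) by force
  hence "derived_series B I (Suc 0) = {0}" by simp
  thus ?thesis unfolding solvable_ideal_def using assms(1) by blast
qed

lemma central_element_zero:
  assumes "semisimple B" "\<forall>y. B z y = 0"
  shows "z = 0"
proof -
  have lie: "lie_algebra B" using assms(1) by (simp add: semisimple_def)
  have "B x w = 0" if "w \<in> span {z}" for x w
  proof -
    obtain t where "w = t *\<^sub>R z" using \<open>w \<in> span {z}\<close> unfolding span_singleton by blast
    thus ?thesis using assms(2) lie_algebra_antisym[OF lie, of x z]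
      by (simp add: linear_scale[OF lie_algebra_linear_right[OF lie]])
  qed
  hence "solvable_ideal B (span {z})"
    by (intro abelian_ideal_solvable) (auto simp: lie_ideal_def span_0)
  hence "span {z} = {0}" using assms(1) by (simp add: semisimple_def)
  thus ?thesis using span_superset[of "{z}"] by blast
qed

text \<open>\<open>Real_Vector_Spaces.subspace\<close> is qualified throughout because HOL-Algebra, loaded with
  the Jordan normal form, has its own \<open>subspace\<close>.\<close>

definition lie_subalgebra :: "('a::real_vector \<Rightarrow> 'a \<Rightarrow> 'a) \<Rightarrow> 'a set \<Rightarrow> bool" where
  "lie_subalgebra B N \<longleftrightarrow> Real_Vector_Spaces.subspace N \<and> (\<forall>x\<in>N. \<forall>y\<in>N. B x y \<in> N)"

lemma lie_subalgebra_span_insert: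
  assumes lie: "lie_algebra B" and K: "lie_subalgebra B K" and y: "\<forall>x\<in>K. B x y \<in> K"
  shows "lie_subalgebra B (span (insert y K))"
proof -
  have b: "bilinear B" by (rule lie_algebra_bilinear[OF lie])
  have sK: "Real_Vector_Spaces.subspace K" and BK: "\<forall>x\<in>K. \<forall>z\<in>K. B x z \<in> K"
    using K by (simp_all add: lie_subalgebra_def)
  have spK: "span K = K" using sK by simp
  have closed: "B a c \<in> K" if "a - s *\<^sub>R y \<in> K" "c - t *\<^sub>R y \<in> K" for a c s t
  proof -
    define ka kc where "ka = a - s *\<^sub>R y" and "kc = c - t *\<^sub>R y"
    have "B a c = B (ka + s *\<^sub>R y) (kc + t *\<^sub>R y)" by (simp add: ka_def kc_def)
    also have "\<dots> = B ka kc + t *\<^sub>R B ka y - s *\<^sub>R B kc y"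
      using lie_algebra_antisym[OF lie, of y kc] lie_algebra_alternating[OF lie, of y]
      by (simp add: bilinear_ladd[OF b] bilinear_radd[OF b] bilinear_lmul[OF b]
          bilinear_rmul[OF b] algebra_simps)
    finally have e: "B a c = B ka kc + t *\<^sub>R B ka y - s *\<^sub>R B kc y" .
    have "B ka kc \<in> K" "B ka y \<in> K" "B kc y \<in> K"
      using that BK y unfolding ka_def kc_def by blast+
    thus ?thesis unfolding e using sK by (simp add: subspace_add subspace_diff subspace_scale)
  qed
  have "B a c \<in> span (insert y K)" if ac: "a \<in> span (insert y K)" "c \<in> span (insert y K)" for a c
  proof -
    obtain s t where "a - s *\<^sub>R y \<in> K" "c - t *\<^sub>R y \<in> K"
      using ac unfolding span_insert spK by blast
    hence "B a c \<in> insert y K" using closed by blast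
    thus ?thesis by (rule span_base)
  qed
  thus ?thesis unfolding lie_subalgebra_def by simp
qed

lemma funpow_exits_set:
  assumes "(T ^^ k) v \<in> W" "v \<notin> W"
  obtains m where "(T ^^ m) v \<notin> W" "T ((T ^^ m) v) \<in> W"
proof -
  have "\<exists>m. (T ^^ m) v \<notin> W \<and> T ((T ^^ m) v) \<in> W" using assms(1)
  proof (induction k)
    case 0 thus ?case using assms(2) by simp
  next
    case (Suc k)
    show ?case
    proof (cases "(T ^^ k) v \<in> W")
      case True thus ?thesis by (rule Suc.IH)
    next
      case False thus ?thesis using Suc.prems by (intro exI[of _ k]) simp
    qed
  qed
  thus ?thesis using that by blast
qed

lemma exists_max_dim_psubset:
  fixes N :: "'a::euclidean_space set"
  assumes "P K0" "K0 \<subset> N"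
  shows "\<exists>K. P K \<and> K \<subset> N \<and> (\<forall>K'. P K' \<and> K' \<subset> N \<longrightarrow> dim K' \<le> dim K)"
proof -
  let ?D = "\<lambda>d. \<exists>K. P K \<and> K \<subset> N \<and> dim K = d"
  have start: "?D (dim K0)" using assms by (intro exI[of _ K0]) simp
  have bound: "\<forall>d. ?D d \<longrightarrow> d \<le> dim N"
  proof (intro allI impI)
    fix d assume "?D d"
    then obtain K where "K \<subset> N" "dim K = d" by blast
    thus "d \<le> dim N" using dim_subset[of K N] by simp
  qed
  have "\<exists>d. ?D d \<and> (\<forall>d'. ?D d' \<longrightarrow> d' \<le> d)"
    by (rule Nat.ex_has_greatest_nat[OF start bound])
  then obtain d K where K: "P K" "K \<subset> N" "dim K = d" and max: "\<forall>d'. ?D d' \<longrightarrow> d' \<le> d"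
    by blast
  have "dim K' \<le> dim K" if "P K'" "K' \<subset> N" for K'
  proof -
    have "?D (dim K')" using that by (intro exI[of _ K']) simp
    thus ?thesis using max K(3) by simp
  qed
  thus ?thesis using K(1,2) by blast
qed

lemma dim_psubset_subspace:
  fixes S :: "'a::euclidean_space set"
  assumes "Real_Vector_Spaces.subspace S" "Real_Vector_Spaces.subspace T" "S \<subset> T"
  shows "dim S < dim T"
proof -
  have "span S = S" "span T = T" using assms(1,2) by simp_all
  with assms(3) have "span S \<subset> span T" by (simp only:)
  thus ?thesis by (rule dim_psubset)
qed

lemma max_lie_subalgebra_span_insert:
  fixes N :: "'a::euclidean_space set"
  assumes lie: "lie_algebra B" and sN: "Real_Vector_Spaces.subspace N"
    and K: "lie_subalgebra B K" "K \<subseteq> N"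
    and K_max: "\<forall>K'. lie_subalgebra B K' \<and> K' \<subset> N \<longrightarrow> dim K' \<le> dim K"
    and y: "y \<in> N" "y \<notin> K" "\<forall>x\<in>K. B x y \<in> K"
  shows "span (insert y K) = N"
proof (rule ccontr)
  let ?K' = "span (insert y K)"
  have sK: "Real_Vector_Spaces.subspace K" using K(1) by (simp add: lie_subalgebra_def)
  assume "?K' \<noteq> N"
  moreover have "?K' \<subseteq> N" using y(1) K(2) by (intro span_minimal[OF _ sN]) blast
  ultimately have "dim ?K' \<le> dim K"
    by (intro K_max[rule_format] conjI lie_subalgebra_span_insert[OF lie K(1) y(3)])
      (simp add: psubset_eq)
  moreover have "K \<subset> ?K'" using y(2) span_superset[of "insert y K"] by auto
  hence "dim K < dim ?K'" by (intro dim_psubset_subspace[OF sK]) simp_all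
  ultimately show False by simp
qed

text \<open>Inductive step of Engel's theorem: a vector annihilated modulo \<open>W\<close> by \<open>K\<close> is pushed along
  the nilpotent operator \<open>B y\<close> up to the last step before it falls into \<open>W\<close>; it stays annihilated
  by \<open>K\<close> because \<open>y\<close> normalizes \<open>K\<close>.\<close>
lemma engel_extend:
  assumes lie: "lie_algebra B" and sW: "Real_Vector_Spaces.subspace W"
    and yU: "\<forall>u\<in>U. B y u \<in> U" and yW: "\<forall>w\<in>W. B y w \<in> W"
    and yK: "\<forall>x\<in>K. B x y \<in> K" and ynil: "\<forall>u. (B y ^^ k) u = 0"
    and v0: "v0 \<in> U" "v0 \<notin> W" "\<forall>x\<in>K. B x v0 \<in> W"
    and sK: "Real_Vector_Spaces.subspace K"
  shows "\<exists>v\<in>U. v \<notin> W \<and> (\<forall>x\<in>span (insert y K). B x v \<in> W)"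
proof -
  define U0 where "U0 = {u\<in>U. \<forall>x\<in>K. B x u \<in> W}"
  have U0_closed: "B y u \<in> U0" if "u \<in> U0" for u
  proof -
    have "B x (B y u) \<in> W" if "x \<in> K" for x
      using lie_algebra_leibniz[OF lie, of x y u] \<open>u \<in> U0\<close> that yK yW sW
      unfolding U0_def by (metis (no_types, lifting) mem_Collect_eq subspace_add)
    thus ?thesis using \<open>u \<in> U0\<close> yU unfolding U0_def by blast
  qed
  have "(B y ^^ m) v0 \<in> U0" for m
    by (induction m) (use v0 U0_closed in \<open>auto simp: U0_def\<close>)
  moreover have "(B y ^^ k) v0 \<in> W" using ynil sW subspace_0 by simp
  then obtain m where m: "(B y ^^ m) v0 \<notin> W" "B y ((B y ^^ m) v0) \<in> W"
    using funpow_exits_set v0(2) by metis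
  ultimately have u: "(B y ^^ m) v0 \<in> U0" by blast
  have "B x ((B y ^^ m) v0) \<in> W" if x: "x \<in> span (insert y K)" for x
  proof -
    obtain t where t: "x - t *\<^sub>R y \<in> K"
      using x unfolding span_insert span_eq_iff[THEN iffD2, OF sK] by blast
    have "B (x - t *\<^sub>R y) u = B x u - t *\<^sub>R B y u" for u
      using linear_diff[OF lie_algebra_linear_left[OF lie, of u], of x "t *\<^sub>R y"]
        linear_scale[OF lie_algebra_linear_left[OF lie, of u], of t y] by simp
    hence "B x u = B (x - t *\<^sub>R y) u + t *\<^sub>R B y u" for u by (simp add: algebra_simps)
    thus ?thesis using t u m(2) sW unfolding U0_def by (simp add: subspace_add subspace_scale)
  qed
  thus ?thesis using u m(1) unfolding U0_def by blast
qed

lemma lie_subalgebra_zero: "lie_algebra B \<Longrightarrow> lie_subalgebra B {0}"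
  using linear_0[OF lie_algebra_linear_right] by (simp add: lie_subalgebra_def)

lemma engel_common_vector:
  fixes B :: "'a::euclidean_space \<Rightarrow> 'a \<Rightarrow> 'a"
  assumes lie: "lie_algebra B"
  shows "lie_subalgebra B N \<Longrightarrow> \<forall>x\<in>N. \<exists>k. \<forall>u. (B x ^^ k) u = 0 \<Longrightarrow>
    Real_Vector_Spaces.subspace U \<Longrightarrow> Real_Vector_Spaces.subspace W \<Longrightarrow> W \<subset> U \<Longrightarrow>
    \<forall>x\<in>N. \<forall>u\<in>U. B x u \<in> U \<Longrightarrow> \<forall>x\<in>N. \<forall>w\<in>W. B x w \<in> W \<Longrightarrow>
    \<exists>v\<in>U. v \<notin> W \<and> (\<forall>x\<in>N. B x v \<in> W)"
proof (induction "dim N" arbitrary: N U W rule: less_induct)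
  case less
  have sN: "Real_Vector_Spaces.subspace N" using less.prems(1) by (simp add: lie_subalgebra_def)
  show ?case
  proof (cases "N \<subseteq> {0}")
    case True
    obtain v where v: "v \<in> U" "v \<notin> W" using less.prems(5) by blast
    have "B x v \<in> W" if "x \<in> N" for x
      using True that linear_0[OF lie_algebra_linear_left[OF lie, of v]] subspace_0[OF less.prems(4)]
      by auto
    thus ?thesis using v by blast
  next
    case False
    hence "{0} \<subset> N" using subspace_0[OF sN] by auto
    then obtain K where K: "lie_subalgebra B K" "K \<subset> N"
      and K_max: "\<forall>K'. lie_subalgebra B K' \<and> K' \<subset> N \<longrightarrow> dim K' \<le> dim K"
      using exists_max_dim_psubset[where P = "lie_subalgebra B", OF lie_subalgebra_zero[OF lie]]
      by metis
    have KN: "K \<subseteq> N" using K(2) by (rule psubset_imp_subset)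
    have sK: "Real_Vector_Spaces.subspace K" using K(1) by (simp add: lie_subalgebra_def)
    have "dim K < dim N" by (rule dim_psubset_subspace[OF sK sN K(2)])
    note IH = less.hyps[OF this K(1)]
    have nilK: "\<forall>x\<in>K. \<exists>k. \<forall>u. (B x ^^ k) u = 0" using less.prems(2) KN by blast
    obtain y where y: "y \<in> N" "y \<notin> K" "\<forall>x\<in>K. B x y \<in> K"
      using IH[OF nilK sN sK K(2)] K(1) less.prems(1) KN unfolding lie_subalgebra_def by blast
    have span_eq: "span (insert y K) = N"
      by (rule max_lie_subalgebra_span_insert[OF lie sN K(1) KN K_max y])
    obtain k where ynil: "\<forall>u. (B y ^^ k) u = 0" using less.prems(2) y(1) by blast
    obtain v0 where v0: "v0 \<in> U" "v0 \<notin> W" "\<forall>x\<in>K. B x v0 \<in> W"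
      using IH[OF nilK less.prems(3,4,5)] less.prems(6,7) KN by blast
    have "\<forall>u\<in>U. B y u \<in> U" "\<forall>w\<in>W. B y w \<in> W" using less.prems(6,7) y(1) by blast+
    from engel_extend[OF lie less.prems(4) this y(3) ynil v0 sK]
    show ?thesis unfolding span_eq .
  qed
qed

lemma ad_nilpotent_ideal_zero:
  fixes B :: "'a::euclidean_space \<Rightarrow> 'a \<Rightarrow> 'a"
  assumes lie: "lie_algebra B" and no_solvable: "\<forall>I. solvable_ideal B I \<longrightarrow> I = {0}"
    and I: "lie_ideal B I" and nil: "\<forall>x\<in>I. \<exists>k. \<forall>u. (B x ^^ k) u = 0"
  shows "I = {0}"
proof (rule ccontr)
  assume ne: "I \<noteq> {0}"
  have lin: "linear (B x)" for x by (rule lie_algebra_linear_right[OF lie])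
  have sI: "Real_Vector_Spaces.subspace I" and BI: "\<And>x y. y \<in> I \<Longrightarrow> B x y \<in> I"
    using I by (auto simp: lie_ideal_def)
  have "\<exists>v\<in>I. v \<notin> {0} \<and> (\<forall>x\<in>I. B x v \<in> {0})"
  proof (rule engel_common_vector[OF lie _ nil sI])
    show "lie_subalgebra B I" using sI BI by (simp add: lie_subalgebra_def)
    show "Real_Vector_Spaces.subspace {0::'a}" using subspace_span[of "{}::'a set"] by simp
    show "{0} \<subset> I" using ne subspace_0[OF sI] by auto
  qed (use BI linear_0[OF lin] in auto)
  then obtain v where v: "v \<in> I" "v \<noteq> 0" "\<forall>x\<in>I. B x v = 0" by blast
  define C where "C = {v\<in>I. \<forall>x\<in>I. B x v = 0}"
  have sC: "Real_Vector_Spaces.subspace C" unfolding C_def real_vector.subspace_def using sI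
    by (auto simp: subspace_0 subspace_add subspace_scale linear_add[OF lin] linear_scale[OF lin]
        linear_0[OF lin])
  have "B y c \<in> C" if c: "c \<in> C" for y c
  proof -
    have "B x (B y c) = 0" if "x \<in> I" for x
    proof -
      have "B y x \<in> I" using BI that by blast
      hence "B x y \<in> I" using lie_algebra_antisym[OF lie, of x y] sI by (simp add: subspace_neg)
      thus ?thesis using c that lie_algebra_leibniz[OF lie, of x y c] linear_0[OF lin]
        unfolding C_def by simp
    qed
    thus ?thesis using BI c unfolding C_def by blast
  qed
  hence "solvable_ideal B C"
    using sC by (intro abelian_ideal_solvable) (auto simp: lie_ideal_def C_def)
  hence "C = {0}" using no_solvable by blast
  moreover have "v \<in> C" unfolding C_def using v by blast
  ultimately show False using v(2) by blast
qed

section \<open>Complex matrices as functions on indices\<close>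

type_synonym cvec = "nat \<Rightarrow> complex"
type_synonym cmat = "nat \<Rightarrow> nat \<Rightarrow> complex"
type_synonym sconst = "nat \<Rightarrow> nat \<Rightarrow> nat \<Rightarrow> complex"

text \<open>Vectors and matrices of size \<open>n\<close> are functions on all indices; only the entries below \<open>n\<close>
  count, so equations between them are stated up to \<open>agree\<close> and \<open>mat_agree\<close>.\<close>

definition mapply :: "nat \<Rightarrow> cmat \<Rightarrow> cvec \<Rightarrow> cvec" where
  "mapply n A u i = (\<Sum>k<n. A i k * u k)"

definition mmult :: "nat \<Rightarrow> cmat \<Rightarrow> cmat \<Rightarrow> cmat" where
  "mmult n A B i j = (\<Sum>k<n. A i k * B k j)"

definition mtrace :: "nat \<Rightarrow> cmat \<Rightarrow> complex" where
  "mtrace n A = (\<Sum>i<n. A i i)"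

definition idm :: cmat where
  "idm i j = (if i = j then 1 else 0)"

definition agree :: "nat \<Rightarrow> cvec \<Rightarrow> cvec \<Rightarrow> bool" where
  "agree n u v \<longleftrightarrow> (\<forall>k<n. u k = v k)"

definition mat_agree :: "nat \<Rightarrow> cmat \<Rightarrow> cmat \<Rightarrow> bool" where
  "mat_agree n A B \<longleftrightarrow> (\<forall>i<n. \<forall>j<n. A i j = B i j)"

definition delta_vec :: "nat \<Rightarrow> cvec" where
  "delta_vec i k = (if k = i then 1 else 0)"

lemma agree_refl [simp]: "agree n u u"
  by (simp add: agree_def)

lemma agree_sym: "agree n u v \<Longrightarrow> agree n v u"
  by (simp add: agree_def)

lemma agree_trans: "agree n u v \<Longrightarrow> agree n v w \<Longrightarrow> agree n u w"
  by (simp add: agree_def)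

lemma mapply_cong: "agree n u v \<Longrightarrow> mapply n A u = mapply n A v"
  unfolding agree_def mapply_def by (intro ext sum.cong) auto

lemma mapply_mat_cong: "mat_agree n A A' \<Longrightarrow> agree n (mapply n A u) (mapply n A' u)"
  unfolding mat_agree_def agree_def mapply_def by simp

lemma mmult_mat_cong:
  "mat_agree n A A' \<Longrightarrow> mat_agree n B B' \<Longrightarrow> mat_agree n (mmult n A B) (mmult n A' B')"
  unfolding mat_agree_def mmult_def by simp

lemma mtrace_mat_cong: "mat_agree n A A' \<Longrightarrow> mtrace n A = mtrace n A'"
  unfolding mat_agree_def mtrace_def by simp

lemma mat_agree_refl [simp]: "mat_agree n A A"
  by (simp add: mat_agree_def)

lemma mat_agree_sym: "mat_agree n A B \<Longrightarrow> mat_agree n B A"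
  by (simp add: mat_agree_def)

lemma mat_agree_trans: "mat_agree n A B \<Longrightarrow> mat_agree n B C \<Longrightarrow> mat_agree n A C"
  by (simp add: mat_agree_def)

lemma sum_delta_vec:
  assumes "i < n" shows "(\<Sum>k<n. delta_vec i k * f k) = f i"
proof -
  have "(\<Sum>k<n. delta_vec i k * f k) = (\<Sum>k<n. if k = i then f k else 0)"
    by (rule sum.cong) (simp_all add: delta_vec_def)
  thus ?thesis using assms by (simp add: sum.delta)
qed

lemma sum_delta_vec_right: "i < n \<Longrightarrow> (\<Sum>k<n. f k * delta_vec i k) = f i"
  using sum_delta_vec[of i n f] by (simp add: mult.commute)

lemma mapply_delta_vec: "mapply n A (delta_vec i) m = (if i < n then A m i else 0)"
  unfolding mapply_def delta_vec_def by (simp add: if_distrib cong: if_cong)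

lemma idm_delta_vec: "idm i = delta_vec i" "idm i j = delta_vec j i"
  by (auto simp: idm_def delta_vec_def)

lemma mapply_idm: "agree n (mapply n idm u) u"
  unfolding agree_def mapply_def idm_delta_vec(1) by (simp add: sum_delta_vec)

lemma mmult_idm_left: "mat_agree n (mmult n idm A) A"
  unfolding mat_agree_def mmult_def idm_delta_vec(1) by (simp add: sum_delta_vec)

lemma mmult_idm_right: "mat_agree n (mmult n A idm) A"
  unfolding mat_agree_def mmult_def idm_delta_vec(2) by (simp add: sum_delta_vec_right)

lemma mapply_add: "mapply n A (\<lambda>k. u k + v k) i = mapply n A u i + mapply n A v i"
  unfolding mapply_def by (simp add: distrib_left sum.distrib)

lemma mapply_smult: "mapply n A (\<lambda>k. a * u k) i = a * mapply n A u i"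
  unfolding mapply_def by (simp add: sum_distrib_left algebra_simps)

lemma mapply_zero: "mapply n A (\<lambda>k. 0) i = 0"
  unfolding mapply_def by simp

lemma mapply_sum:
  "finite I \<Longrightarrow> mapply n A (\<lambda>a. \<Sum>i\<in>I. f i a) l = (\<Sum>i\<in>I. mapply n A (f i) l)"
  by (induction I rule: finite_induct) (simp_all add: mapply_add mapply_def)

lemma mapply_mmult: "mapply n (mmult n A B) u = mapply n A (mapply n B u)"
  unfolding mapply_def mmult_def
  by (auto simp: sum_distrib_left sum_distrib_right mult.assoc intro!: ext sum.swap[THEN trans])

lemma mmult_assoc: "mmult n (mmult n A B) C = mmult n A (mmult n B C)"
  unfolding mmult_def
  by (auto simp: sum_distrib_left sum_distrib_right mult.assoc intro!: ext sum.swap[THEN trans])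

lemma mtrace_mmult_commute: "mtrace n (mmult n A B) = mtrace n (mmult n B A)"
  unfolding mtrace_def mmult_def by (subst sum.swap) (simp add: mult.commute)

lemma mmult_diff_left: "mmult n (\<lambda>i k. A i k - A' i k) C = (\<lambda>i j. mmult n A C i j - mmult n A' C i j)"
  unfolding mmult_def by (intro ext) (simp add: algebra_simps sum_subtractf)

lemma mmult_diff_right: "mmult n C (\<lambda>i k. A i k - A' i k) = (\<lambda>i j. mmult n C A i j - mmult n C A' i j)"
  unfolding mmult_def by (intro ext) (simp add: algebra_simps sum_subtractf)

lemma mmult_add_left: "mmult n (\<lambda>i k. A i k + A' i k) C = (\<lambda>i j. mmult n A C i j + mmult n A' C i j)"
  unfolding mmult_def by (intro ext) (simp add: algebra_simps sum.distrib)

lemma mmult_add_right: "mmult n C (\<lambda>i k. A i k + A' i k) = (\<lambda>i j. mmult n C A i j + mmult n C A' i j)"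
  unfolding mmult_def by (intro ext) (simp add: algebra_simps sum.distrib)

lemma mmult_smult_left: "mmult n (\<lambda>i k. r * A i k) C = (\<lambda>i j. r * mmult n A C i j)"
  unfolding mmult_def by (intro ext) (simp add: algebra_simps sum_distrib_left)

lemma mmult_smult_right: "mmult n C (\<lambda>i k. r * A i k) = (\<lambda>i j. r * mmult n C A i j)"
  unfolding mmult_def by (intro ext) (simp add: algebra_simps sum_distrib_left)

lemma mtrace_diff: "mtrace n (\<lambda>i j. A i j - A' i j) = mtrace n A - mtrace n A'"
  unfolding mtrace_def by (simp add: sum_subtractf)

lemma mtrace_add: "mtrace n (\<lambda>i j. A i j + A' i j) = mtrace n A + mtrace n A'"
  unfolding mtrace_def by (simp add: sum.distrib)

lemma mtrace_smult: "mtrace n (\<lambda>i j. r * A i j) = r * mtrace n A"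
  unfolding mtrace_def by (simp add: sum_distrib_left)

lemma mtrace_mmult_sum:
  "mtrace n (mmult n A (\<lambda>l k. \<Sum>r<m. f r * M r l k)) = (\<Sum>r<m. f r * mtrace n (mmult n A (M r)))"
proof -
  have "mtrace n (mmult n A (\<lambda>l k. \<Sum>r<m. f r * M r l k)) =
      (\<Sum>i<n. \<Sum>k<n. \<Sum>r<m. f r * (A i k * M r k i))"
    unfolding mtrace_def mmult_def by (simp add: sum_distrib_left mult_ac)
  also have "\<dots> = (\<Sum>r<m. \<Sum>i<n. \<Sum>k<n. f r * (A i k * M r k i))"
    by (subst sum.swap, rule sum.cong, simp, rule sum.swap)
  finally show ?thesis unfolding mtrace_def mmult_def by (simp add: sum_distrib_left)
qed

lemma mtrace_mmult_rotate: "mtrace n (mmult n (mmult n X Y) Z) = mtrace n (mmult n Y (mmult n Z X))"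
proof -
  have "mtrace n (mmult n (mmult n X Y) Z) = mtrace n (mmult n X (mmult n Y Z))"
    by (simp only: mmult_assoc)
  also have "\<dots> = mtrace n (mmult n (mmult n Y Z) X)" by (rule mtrace_mmult_commute)
  finally show ?thesis by (simp only: mmult_assoc)
qed

lemma mtrace_similar:
  assumes "mat_agree n (mmult n Q P) idm"
  shows "mtrace n (mmult n (mmult n P (mmult n X Q)) (mmult n P (mmult n Y Q))) = mtrace n (mmult n X Y)"
proof -
  have "mtrace n (mmult n (mmult n P (mmult n X Q)) (mmult n P (mmult n Y Q))) =
      mtrace n (mmult n (mmult n X Q) (mmult n (mmult n P (mmult n Y Q)) P))"
    by (rule mtrace_mmult_rotate)
  also have "\<dots> = mtrace n (mmult n X (mmult n (mmult n Q P) (mmult n Y (mmult n Q P))))"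
    by (simp only: mmult_assoc)
  also have "\<dots> = mtrace n (mmult n X (mmult n idm (mmult n Y idm)))"
    by (intro mtrace_mat_cong mmult_mat_cong assms) (simp_all add: mat_agree_def)
  also have "\<dots> = mtrace n (mmult n X Y)"
    by (intro mtrace_mat_cong mmult_mat_cong mat_agree_trans[OF mmult_idm_left]
        mmult_idm_right) (simp add: mat_agree_def)
  finally show ?thesis .
qed

section \<open>Derivations of an algebra given by structure constants\<close>

definition sc_mult :: "nat \<Rightarrow> sconst \<Rightarrow> cvec \<Rightarrow> cvec \<Rightarrow> cvec" where
  "sc_mult n c u w l = (\<Sum>i<n. \<Sum>j<n. u i * w j * c i j l)"

definition sc_derivation :: "nat \<Rightarrow> sconst \<Rightarrow> cmat \<Rightarrow> bool" where
  "sc_derivation n c E \<longleftrightarrow> (\<forall>u w. agree n (mapply n E (sc_mult n c u w))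
     (\<lambda>l. sc_mult n c (mapply n E u) w l + sc_mult n c u (mapply n E w) l))"

lemma sc_mult_cong: "agree n u u' \<Longrightarrow> agree n w w' \<Longrightarrow> sc_mult n c u w = sc_mult n c u' w'"
  unfolding agree_def sc_mult_def by (intro ext sum.cong) auto

lemma sc_mult_add_left: "sc_mult n c (\<lambda>k. u k + v k) w l = sc_mult n c u w l + sc_mult n c v w l"
  unfolding sc_mult_def by (simp add: distrib_right sum.distrib)

lemma sc_mult_add_right: "sc_mult n c u (\<lambda>k. v k + w k) l = sc_mult n c u v l + sc_mult n c u w l"
  unfolding sc_mult_def by (simp add: distrib_left distrib_right sum.distrib)

lemma sc_mult_smult_left: "sc_mult n c (\<lambda>k. a * u k) w l = a * sc_mult n c u w l"
  unfolding sc_mult_def by (simp add: sum_distrib_left algebra_simps)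

lemma sc_mult_smult_right: "sc_mult n c u (\<lambda>k. a * w k) l = a * sc_mult n c u w l"
  unfolding sc_mult_def by (simp add: sum_distrib_left algebra_simps)

lemma sc_mult_diff_left:
  "sc_mult n c (\<lambda>k. u k - a * v k) w l = sc_mult n c u w l - a * sc_mult n c v w l"
  unfolding sc_mult_def by (simp add: sum_distrib_left algebra_simps sum_subtractf)

lemma sc_mult_diff_right:
  "sc_mult n c u (\<lambda>k. w k - a * v k) l = sc_mult n c u w l - a * sc_mult n c u v l"
  unfolding sc_mult_def by (simp add: sum_distrib_left algebra_simps sum_subtractf)

lemma sc_mult_zero_left: "agree n u (\<lambda>k. 0) \<Longrightarrow> sc_mult n c u w l = 0"
  unfolding agree_def sc_mult_def by (intro sum.neutral ballI) auto

lemma sc_mult_zero_right: "agree n w (\<lambda>k. 0) \<Longrightarrow> sc_mult n c u w l = 0"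
  unfolding agree_def sc_mult_def by (intro sum.neutral ballI) auto

lemma sc_mult_sum_left:
  "finite I \<Longrightarrow> sc_mult n c (\<lambda>a. \<Sum>i\<in>I. f i a) w l = (\<Sum>i\<in>I. sc_mult n c (f i) w l)"
  by (induction I rule: finite_induct) (simp_all add: sc_mult_add_left sc_mult_def)

lemma sc_mult_sum_right:
  "finite I \<Longrightarrow> sc_mult n c u (\<lambda>a. \<Sum>i\<in>I. f i a) l = (\<Sum>i\<in>I. sc_mult n c u (f i) l)"
  by (induction I rule: finite_induct) (simp_all add: sc_mult_add_right sc_mult_def)

lemma sc_mult_delta_left: "i < n \<Longrightarrow> sc_mult n c (delta_vec i) w l = (\<Sum>j<n. w j * c i j l)"
  unfolding sc_mult_def by (simp add: mult.assoc sum_delta_vec flip: sum_distrib_left)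

lemma sc_mult_delta_right: "j < n \<Longrightarrow> sc_mult n c u (delta_vec j) l = (\<Sum>i<n. u i * c i j l)"
  unfolding sc_mult_def
  by (intro sum.cong refl) (simp add: mult.assoc mult.left_commute[of "u _"] sum_delta_vec
      flip: sum_distrib_left)

lemma sc_mult_delta: "i < n \<Longrightarrow> j < n \<Longrightarrow> sc_mult n c (delta_vec i) (delta_vec j) l = c i j l"
  by (simp add: sc_mult_delta_left sum_delta_vec)

lemma sc_derivation_coeffs:
  assumes der: "sc_derivation n c E" and ijl: "i < n" "j < n" "l < n"
  shows "(\<Sum>k<n. c i j k * E l k) = (\<Sum>m<n. E m i * c m j l) + (\<Sum>m<n. E m j * c i m l)"
proof -
  have "mapply n E (sc_mult n c (delta_vec i) (delta_vec j)) l =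
      sc_mult n c (mapply n E (delta_vec i)) (delta_vec j) l +
      sc_mult n c (delta_vec i) (mapply n E (delta_vec j)) l"
    using der ijl(3) unfolding sc_derivation_def agree_def by blast
  moreover have "mapply n E (sc_mult n c (delta_vec i) (delta_vec j)) l = (\<Sum>k<n. c i j k * E l k)"
    unfolding mapply_def using sc_mult_delta[OF ijl(1,2)] by (simp add: mult.commute)
  moreover have "sc_mult n c (mapply n E (delta_vec i)) (delta_vec j) l = (\<Sum>m<n. E m i * c m j l)"
    using ijl by (simp add: sc_mult_delta_right mapply_delta_vec)
  moreover have "sc_mult n c (delta_vec i) (mapply n E (delta_vec j)) l = (\<Sum>m<n. E m j * c i m l)"
    using ijl by (simp add: sc_mult_delta_left mapply_delta_vec)
  ultimately show ?thesis by simp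
qed

lemma sc_derivation_coeffsI:
  assumes coeffs: "\<forall>i<n. \<forall>j<n. \<forall>l<n.
    (\<Sum>k<n. c i j k * E l k) = (\<Sum>m<n. E m i * c m j l) + (\<Sum>m<n. E m j * c i m l)"
  shows "sc_derivation n c E"
  unfolding sc_derivation_def agree_def
proof (intro allI impI)
  fix u w :: cvec and l assume l: "l < n"
  have "mapply n E (sc_mult n c u w) l = (\<Sum>i<n. \<Sum>j<n. u i * w j * (\<Sum>k<n. c i j k * E l k))"
    unfolding mapply_def sc_mult_def
    by (simp add: sum_distrib_left sum_distrib_right mult_ac, subst sum.swap, rule sum.cong, simp,
        subst sum.swap, simp)
  also have "\<dots> = (\<Sum>i<n. \<Sum>j<n. u i * w j * ((\<Sum>m<n. E m i * c m j l) + (\<Sum>m<n. E m j * c i m l)))"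
    using coeffs l by (intro sum.cong refl) simp
  also have "\<dots> = (\<Sum>i<n. \<Sum>j<n. \<Sum>m<n. u i * w j * E m i * c m j l) +
      (\<Sum>i<n. \<Sum>j<n. \<Sum>m<n. u i * w j * E m j * c i m l)"
    by (simp add: distrib_left sum.distrib sum_distrib_left mult_ac)
  also have "(\<Sum>i<n. \<Sum>j<n. \<Sum>m<n. u i * w j * E m i * c m j l) = sc_mult n c (mapply n E u) w l"
  proof -
    have "(\<Sum>i<n. \<Sum>j<n. \<Sum>m<n. u i * w j * E m i * c m j l) =
        (\<Sum>i<n. \<Sum>m<n. \<Sum>j<n. u i * w j * E m i * c m j l)"
      by (rule sum.cong, simp, rule sum.swap)
    also have "\<dots> = (\<Sum>m<n. \<Sum>i<n. \<Sum>j<n. u i * w j * E m i * c m j l)" by (rule sum.swap)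
    also have "\<dots> = sc_mult n c (mapply n E u) w l" unfolding sc_mult_def mapply_def
      by (simp add: sum_distrib_left sum_distrib_right mult_ac, rule sum.cong, simp, rule sum.swap)
    finally show ?thesis .
  qed
  also have "(\<Sum>i<n. \<Sum>j<n. \<Sum>m<n. u i * w j * E m j * c i m l) = sc_mult n c u (mapply n E w) l"
    unfolding sc_mult_def mapply_def
    by (simp add: sum_distrib_left sum_distrib_right mult_ac, rule sum.cong, simp, rule sum.swap)
  finally show "mapply n E (sc_mult n c u w) l =
      sc_mult n c (mapply n E u) w l + sc_mult n c u (mapply n E w) l" .
qed

lemma sc_derivation_iff_coeffs:
  "sc_derivation n c E \<longleftrightarrow> (\<forall>i<n. \<forall>j<n. \<forall>l<n.
     (\<Sum>k<n. c i j k * E l k) = (\<Sum>m<n. E m i * c m j l) + (\<Sum>m<n. E m j * c i m l))"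
  using sc_derivation_coeffs sc_derivation_coeffsI by blast

lemma sc_derivation_mat_cong: "mat_agree n A A' \<Longrightarrow> sc_derivation n c A \<Longrightarrow> sc_derivation n c A'"
  unfolding sc_derivation_iff_coeffs mat_agree_def by simp

definition mshift :: "nat \<Rightarrow> cmat \<Rightarrow> complex \<Rightarrow> cvec \<Rightarrow> cvec" where
  "mshift n X a u = (\<lambda>k. mapply n X u k - a * u k)"

lemma mshift_pow_add:
  "(mshift n X a ^^ m) (\<lambda>k. u k + v k) = (\<lambda>k. (mshift n X a ^^ m) u k + (mshift n X a ^^ m) v k)"
  by (induction m) (auto simp: mshift_def mapply_add algebra_simps)

lemma mshift_pow_zero: "(mshift n X a ^^ m) (\<lambda>k. 0) = (\<lambda>k. 0)"
  by (induction m) (auto simp: mshift_def mapply_zero)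

lemma mshift_pow_cong: "agree n u v \<Longrightarrow> agree n ((mshift n X a ^^ m) u) ((mshift n X a ^^ m) v)"
proof (induction m)
  case (Suc m) thus ?case using mapply_cong[OF Suc.IH] by (simp add: mshift_def agree_def)
qed simp

lemma sc_derivation_mshift:
  assumes "sc_derivation n c X"
  shows "agree n (mshift n X (a+b) (sc_mult n c u w))
    (\<lambda>k. sc_mult n c (mshift n X a u) w k + sc_mult n c u (mshift n X b w) k)"
  unfolding agree_def
proof (intro allI impI)
  fix l assume l: "l < n"
  have "mshift n X (a+b) (sc_mult n c u w) l =
      sc_mult n c (mapply n X u) w l + sc_mult n c u (mapply n X w) l - (a+b) * sc_mult n c u w l"
    unfolding mshift_def using assms l unfolding sc_derivation_def agree_def by simp
  also have "\<dots> = sc_mult n c (mshift n X a u) w l + sc_mult n c u (mshift n X b w) l"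
    unfolding mshift_def sc_mult_diff_left sc_mult_diff_right by (simp add: algebra_simps)
  finally show "mshift n X (a+b) (sc_mult n c u w) l =
      sc_mult n c (mshift n X a u) w l + sc_mult n c u (mshift n X b w) l" .
qed

lemma sc_derivation_gen_eigvec_mult:
  assumes X: "sc_derivation n c X"
  shows "agree n ((mshift n X a ^^ p) u) (\<lambda>k. 0) \<Longrightarrow> agree n ((mshift n X b ^^ q) w) (\<lambda>k. 0) \<Longrightarrow>
    agree n ((mshift n X (a+b) ^^ (p+q)) (sc_mult n c u w)) (\<lambda>k. 0)"
proof (induction "p+q" arbitrary: p q u w)
  case 0
  hence "sc_mult n c u w = (\<lambda>k. 0)" using sc_mult_zero_left by auto
  thus ?case using 0 by simp
next
  case (Suc N)
  show ?case
  proof (cases p)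
    case 0
    hence "sc_mult n c u w = (\<lambda>k. 0)" using Suc.prems sc_mult_zero_left by auto
    thus ?thesis by (simp add: mshift_pow_zero)
  next
    case (Suc p')
    show ?thesis
    proof (cases q)
      case 0
      hence "sc_mult n c u w = (\<lambda>k. 0)" using Suc.prems sc_mult_zero_right by auto
      thus ?thesis by (simp add: mshift_pow_zero)
    next
      case (Suc q')
      have pq: "p + q = Suc (p' + q)" "p' + q = p + q'" using \<open>p = Suc p'\<close> \<open>q = Suc q'\<close> by simp_all
      have split: "agree n ((mshift n X (a+b) ^^ (p+q)) (sc_mult n c u w))
          ((mshift n X (a+b) ^^ (p'+q))
            (\<lambda>k. sc_mult n c (mshift n X a u) w k + sc_mult n c u (mshift n X b w) k))"
        unfolding pq(1) funpow_Suc_right comp_def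
        by (rule mshift_pow_cong[OF sc_derivation_mshift[OF X]])
      have left: "agree n ((mshift n X (a+b) ^^ (p'+q)) (sc_mult n c (mshift n X a u) w)) (\<lambda>k. 0)"
      proof (rule Suc.hyps)
        show "N = p' + q" using Suc.hyps(2) pq by simp
        show "agree n ((mshift n X a ^^ p') (mshift n X a u)) (\<lambda>k. 0)"
          using Suc.prems(1) \<open>p = Suc p'\<close> by (simp add: funpow_Suc_right del: funpow.simps)
      qed fact
      have right: "agree n ((mshift n X (a+b) ^^ (p'+q)) (sc_mult n c u (mshift n X b w))) (\<lambda>k. 0)"
        unfolding pq(2)
      proof (rule Suc.hyps)
        show "N = p + q'" using Suc.hyps(2) pq by simp
        show "agree n ((mshift n X b ^^ q') (mshift n X b w)) (\<lambda>k. 0)"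
          using Suc.prems(2) \<open>q = Suc q'\<close> by (simp add: funpow_Suc_right del: funpow.simps)
      qed fact
      show ?thesis using split left right unfolding mshift_pow_add by (simp add: agree_def)
    qed
  qed
qed

section \<open>Cartan's criterion for derivations\<close>

text \<open>The two properties of a Jordan normal form that the argument needs.\<close>

definition jordan_like :: "nat \<Rightarrow> cmat \<Rightarrow> bool" where
  "jordan_like n J \<longleftrightarrow> (\<forall>i<n. \<forall>j<n. j < i \<longrightarrow> J i j = 0) \<and>
     (\<forall>i<n. \<forall>j<n. i \<noteq> j \<longrightarrow> J i j \<noteq> 0 \<longrightarrow> J i i = J j j)"

lemma mshift_split:
  "k < n \<Longrightarrow> mshift n J a v k = (J k k - a) * v k + (\<Sum>j\<in>{..<n}-{k}. J k j * v j)"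
  unfolding mshift_def mapply_def by (simp add: sum.remove[of "{..<n}" k] algebra_simps)

lemma jordan_like_mshift_support:
  assumes J: "jordan_like n J" and v: "\<forall>k<n. v k \<noteq> 0 \<longrightarrow> J k k = a \<and> k < Suc m"
  shows "\<forall>k<n. mshift n J a v k \<noteq> 0 \<longrightarrow> J k k = a \<and> k < m"
proof (intro allI impI)
  fix k assume k: "k < n" and nz: "mshift n J a v k \<noteq> 0"
  have "(J k k - a) * v k = 0" using v k by (cases "v k = 0") auto
  hence "mshift n J a v k = (\<Sum>j\<in>{..<n}-{k}. J k j * v j)" using mshift_split[OF k] by simp
  hence "(\<Sum>j\<in>{..<n}-{k}. J k j * v j) \<noteq> 0" using nz by simp
  then obtain j where j: "j \<in> {..<n}-{k}" "J k j * v j \<noteq> 0" by (meson sum.neutral)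
  hence "J j j = a" "j < Suc m" "\<not> j < k" "J k k = J j j"
    using v J k unfolding jordan_like_def by auto
  thus "J k k = a \<and> k < m" using j(1) by auto
qed

lemma jordan_like_mshift_pow_zero:
  assumes J: "jordan_like n J"
  shows "\<forall>k<n. v k \<noteq> 0 \<longrightarrow> J k k = a \<and> k < m \<Longrightarrow> agree n ((mshift n J a ^^ m) v) (\<lambda>k. 0)"
proof (induction m arbitrary: v)
  case 0 thus ?case by (auto simp: agree_def)
next
  case (Suc m)
  have "agree n ((mshift n J a ^^ m) (mshift n J a v)) (\<lambda>k. 0)"
    by (rule Suc.IH[OF jordan_like_mshift_support[OF J Suc.prems]])
  thus ?case by (simp add: funpow_Suc_right del: funpow.simps)
qed

lemma jordan_like_gen_eigvec_delta:
  "jordan_like n J \<Longrightarrow> i < n \<Longrightarrow> agree n ((mshift n J (J i i) ^^ n) (delta_vec i)) (\<lambda>k. 0)"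
  by (rule jordan_like_mshift_pow_zero) (auto simp: delta_vec_def)

lemma jordan_like_nilpotent:
  assumes "jordan_like n J" "\<forall>i<n. J i i = 0"
  shows "agree n ((mapply n J ^^ n) v) (\<lambda>k. 0)"
proof -
  have "mshift n J 0 = mapply n J" by (auto simp: mshift_def)
  thus ?thesis using jordan_like_mshift_pow_zero[OF assms(1), of v 0 n] assms(2) by simp
qed

lemma jordan_like_mshift_tail:
  assumes J: "jordan_like n J" and j: "j < n" "J j j \<noteq> a"
    and v: "\<forall>i<n. j < i \<longrightarrow> J i i \<noteq> a \<longrightarrow> v i = 0"
  shows "mshift n J a v j = (J j j - a) * v j"
proof -
  have "J j i * v i = 0" if i: "i \<in> {..<n}-{j}" for i
  proof (cases "J j i = 0")
    case False
    hence "\<not> i < j" "J j j = J i i" using J i j unfolding jordan_like_def by auto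
    thus ?thesis using v i j by auto
  qed simp
  thus ?thesis using mshift_split[OF j(1)] by (simp add: sum.neutral)
qed

text \<open>Conversely, a generalized eigenvector for \<open>a\<close> has no component at positions whose
  diagonal entry differs from \<open>a\<close>: the last such position is only scaled by \<open>J k k - a\<close>.\<close>
lemma jordan_like_gen_eigvec_support:
  assumes J: "jordan_like n J" and z: "agree n ((mshift n J a ^^ N) w) (\<lambda>k. 0)"
  shows "\<forall>k<n. J k k \<noteq> a \<longrightarrow> w k = 0"
proof (rule ccontr)
  let ?S = "{k. k < n \<and> J k k \<noteq> a \<and> w k \<noteq> 0}"
  assume "\<not> (\<forall>k<n. J k k \<noteq> a \<longrightarrow> w k = 0)"
  hence ne: "?S \<noteq> {}" by auto
  define k where "k = Max ?S"
  have fin: "finite ?S" by simp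
  have k: "k < n" "J k k \<noteq> a" "w k \<noteq> 0" using Max_in[OF fin ne] unfolding k_def by auto
  have k_max: "w j = 0" if "j < n" "k < j" "J j j \<noteq> a" for j
  proof (rule ccontr)
    assume "w j \<noteq> 0"
    hence "j \<le> k" unfolding k_def using Max_ge[OF fin] that by auto
    thus False using that by simp
  qed
  have inv: "(mshift n J a ^^ m) w k = (J k k - a)^m * w k \<and>
      (\<forall>j<n. k < j \<longrightarrow> J j j \<noteq> a \<longrightarrow> (mshift n J a ^^ m) w j = 0)" for m
  proof (induction m)
    case 0 thus ?case using k_max by auto
  next
    case (Suc m)
    hence "mshift n J a ((mshift n J a ^^ m) w) j = (J j j - a) * (mshift n J a ^^ m) w j"
      if "j < n" "k \<le> j" "J j j \<noteq> a" for j
      using that by (intro jordan_like_mshift_tail[OF J]) auto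
    thus ?case using Suc.IH k(1,2) by auto
  qed
  have "(mshift n J a ^^ N) w k = 0" using z k(1) by (simp add: agree_def)
  moreover have "(J k k - a)^N * w k \<noteq> 0" using k by simp
  ultimately show False using inv[of N] by simp
qed

text \<open>Structure constants of the same product in the basis given by the columns of \<open>P\<close>, read
  off with \<open>Q = P\<inverse>\<close>.\<close>
definition sc_transport :: "nat \<Rightarrow> sconst \<Rightarrow> cmat \<Rightarrow> cmat \<Rightarrow> sconst" where
  "sc_transport n c P Q i j l = mapply n Q (sc_mult n c (\<lambda>a. P a i) (\<lambda>a. P a j)) l"

lemma sc_mult_transport:
  "sc_mult n (sc_transport n c P Q) u w = mapply n Q (sc_mult n c (mapply n P u) (mapply n P w))"
proof
  fix l
  have "mapply n P u = (\<lambda>a. \<Sum>i<n. u i * P a i)" "mapply n P w = (\<lambda>a. \<Sum>j<n. w j * P a j)"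
    unfolding mapply_def by (simp_all add: mult.commute)
  hence "sc_mult n c (mapply n P u) (mapply n P w) k =
      (\<Sum>i<n. \<Sum>j<n. u i * w j * sc_mult n c (\<lambda>a. P a i) (\<lambda>a. P a j) k)" for k
    by (simp add: sc_mult_sum_left sc_mult_sum_right sc_mult_smult_left sc_mult_smult_right
        sum_distrib_left mult.assoc)
  hence "mapply n Q (sc_mult n c (mapply n P u) (mapply n P w)) l =
      mapply n Q (\<lambda>k. \<Sum>i<n. \<Sum>j<n. u i * w j * sc_mult n c (\<lambda>a. P a i) (\<lambda>a. P a j) k) l"
    by presburger
  also have "\<dots> = (\<Sum>i<n. \<Sum>j<n. u i * w j * sc_transport n c P Q i j l)"
    unfolding sc_transport_def by (simp add: mapply_sum mapply_smult[symmetric] mult.assoc)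
  finally show "sc_mult n (sc_transport n c P Q) u w l =
      mapply n Q (sc_mult n c (mapply n P u) (mapply n P w)) l" by (simp add: sc_mult_def)
qed

lemma sc_derivation_transport:
  assumes PQ: "mat_agree n (mmult n P Q) idm" and D: "sc_derivation n c D"
  shows "sc_derivation n (sc_transport n c P Q) (mmult n Q (mmult n D P))"
  unfolding sc_derivation_def agree_def
proof (intro allI impI)
  fix u w :: cvec and l assume l: "l < n"
  have PQv: "agree n (mapply n P (mapply n Q v)) v" for v
    using mapply_mat_cong[OF PQ] mapply_idm agree_trans unfolding mapply_mmult by blast
  let ?c' = "sc_transport n c P Q" and ?Pu = "mapply n P u" and ?Pw = "mapply n P w"
  have "mapply n (mmult n Q (mmult n D P)) (sc_mult n ?c' u w) l =
      mapply n Q (mapply n D (mapply n P (mapply n Q (sc_mult n c ?Pu ?Pw)))) l"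
    by (simp add: mapply_mmult sc_mult_transport)
  also have "\<dots> = mapply n Q (mapply n D (sc_mult n c ?Pu ?Pw)) l"
    by (simp only: mapply_cong[OF PQv])
  also have "\<dots> = mapply n Q (\<lambda>k. sc_mult n c (mapply n D ?Pu) ?Pw k + sc_mult n c ?Pu (mapply n D ?Pw) k) l"
    by (rule fun_cong[OF mapply_cong]) (use D in \<open>simp add: sc_derivation_def\<close>)
  also have "\<dots> = mapply n Q (sc_mult n c (mapply n P (mapply n Q (mapply n D ?Pu))) ?Pw) l +
      mapply n Q (sc_mult n c ?Pu (mapply n P (mapply n Q (mapply n D ?Pw)))) l"
    by (simp add: mapply_add sc_mult_cong[OF PQv agree_refl] sc_mult_cong[OF agree_refl PQv])
  finally show "mapply n (mmult n Q (mmult n D P)) (sc_mult n ?c' u w) l =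
      sc_mult n ?c' (mapply n (mmult n Q (mmult n D P)) u) w l +
      sc_mult n ?c' u (mapply n (mmult n Q (mmult n D P)) w) l"
    by (simp add: sc_mult_transport mapply_mmult)
qed

lemma sc_derivation_transport_back:
  assumes PQ: "mat_agree n (mmult n P Q) idm" and X: "sc_derivation n (sc_transport n c P Q) X"
  shows "sc_derivation n c (mmult n P (mmult n X Q))"
  unfolding sc_derivation_def agree_def
proof (intro allI impI)
  fix u w :: cvec and l assume l: "l < n"
  have PQv: "agree n (mapply n P (mapply n Q v)) v" for v
    using mapply_mat_cong[OF PQ] mapply_idm agree_trans unfolding mapply_mmult by blast
  let ?c' = "sc_transport n c P Q" and ?Qu = "mapply n Q u" and ?Qw = "mapply n Q w"
  have "sc_mult n c u w = sc_mult n c (mapply n P ?Qu) (mapply n P ?Qw)"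
    by (rule sc_mult_cong[OF agree_sym[OF PQv] agree_sym[OF PQv]])
  hence "mapply n (mmult n P (mmult n X Q)) (sc_mult n c u w) l =
      mapply n P (mapply n X (sc_mult n ?c' ?Qu ?Qw)) l"
    by (simp add: mapply_mmult sc_mult_transport)
  also have "\<dots> = mapply n P (\<lambda>k. sc_mult n ?c' (mapply n X ?Qu) ?Qw k + sc_mult n ?c' ?Qu (mapply n X ?Qw) k) l"
    by (rule fun_cong[OF mapply_cong]) (use X in \<open>simp add: sc_derivation_def\<close>)
  also have "\<dots> = sc_mult n c (mapply n P (mapply n X ?Qu)) (mapply n P ?Qw) l +
      sc_mult n c (mapply n P ?Qu) (mapply n P (mapply n X ?Qw)) l"
    using PQv l by (simp add: mapply_add sc_mult_transport agree_def)
  finally show "mapply n (mmult n P (mmult n X Q)) (sc_mult n c u w) l =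
      sc_mult n c (mapply n (mmult n P (mmult n X Q)) u) w l +
      sc_mult n c u (mapply n (mmult n P (mmult n X Q)) w) l"
    by (simp add: mapply_mmult sc_mult_cong[OF agree_refl PQv] sc_mult_cong[OF PQv agree_refl])
qed

lemma jordan_matrix_offdiag_same_diag:
  "i < sum_list (map fst n_as) \<Longrightarrow> j < sum_list (map fst n_as) \<Longrightarrow> i \<noteq> j \<Longrightarrow>
    jordan_matrix n_as $$ (i,j) \<noteq> 0 \<Longrightarrow> jordan_matrix n_as $$ (i,i) = jordan_matrix n_as $$ (j,j)"
proof (induction n_as arbitrary: i j)
  case Nil thus ?case by simp
next
  case (Cons ma rest)
  obtain m a where ma: "ma = (m,a)" by force
  let ?R = "jordan_matrix rest"
  let ?s = "sum_list (map fst rest)"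
  have eq: "jordan_matrix (ma # rest) = four_block_mat (jordan_block m a) (0\<^sub>m m ?s) (0\<^sub>m ?s m) ?R"
    unfolding ma by (rule jordan_matrix_Cons)
  have ij: "i < m + ?s" "j < m + ?s" using Cons.prems(1,2) ma by auto
  have idx: "four_block_mat (jordan_block m a) (0\<^sub>m m ?s) (0\<^sub>m ?s m) ?R $$ (p,q) =
     (if p < m then if q < m then jordan_block m a $$ (p,q) else 0
      else if q < m then 0 else ?R $$ (p - m, q - m))" if "p < m + ?s" "q < m + ?s" for p q
    using that by (subst index_mat_four_block) auto
  show ?case
  proof (cases "i < m \<or> j < m")
    case True
    thus ?thesis using Cons.prems ij unfolding eq idx[OF ij] by (auto simp: idx)
  next
    case False
    have "i - m < ?s" "j - m < ?s" "i - m \<noteq> j - m" using ij False Cons.prems(3) by auto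
    moreover have "?R $$ (i - m, j - m) \<noteq> 0"
      using Cons.prems(4) False ij unfolding eq idx[OF ij] by auto
    ultimately have "?R $$ (i - m, i - m) = ?R $$ (j - m, j - m)" using Cons.IH by blast
    thus ?thesis using False ij unfolding eq by (simp add: idx)
  qed
qed

lemma mmult_index_mat:
  "A \<in> carrier_mat n n \<Longrightarrow> B \<in> carrier_mat n n \<Longrightarrow>
    mat_agree n (mmult n (\<lambda>i j. A $$ (i,j)) (\<lambda>i j. B $$ (i,j))) (\<lambda>i j. (A * B) $$ (i,j))"
  unfolding mat_agree_def mmult_def by (simp add: scalar_prod_def atLeast0LessThan)

lemma jordan_like_similar:
  fixes D :: cmat
  obtains P Q J where "mat_agree n (mmult n P Q) idm" "mat_agree n (mmult n Q P) idm"
    "mat_agree n D (mmult n P (mmult n J Q))" "jordan_like n J"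
proof -
  define Dm where "Dm = mat n n (\<lambda>(i,j). D i j)"
  have Dc: "Dm \<in> carrier_mat n n" unfolding Dm_def by simp
  obtain as where "char_poly Dm = (\<Prod>a\<leftarrow>as. [:- a, 1:])" using char_poly_factorized[OF Dc] by blast
  then obtain n_as where "jordan_nf Dm n_as" using jordan_nf_exists[OF Dc] by blast
  then obtain Pm Qm where w: "similar_mat_wit Dm (jordan_matrix n_as) Pm Qm"
    unfolding jordan_nf_def similar_mat_def by blast
  define Jm where "Jm = jordan_matrix n_as"
  have c: "Jm \<in> carrier_mat n n" "Pm \<in> carrier_mat n n" "Qm \<in> carrier_mat n n"
    and pq: "Pm * Qm = 1\<^sub>m n" and qp: "Qm * Pm = 1\<^sub>m n" and dj: "Dm = Pm * Jm * Qm"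
    using w Dc unfolding similar_mat_wit_def Let_def Jm_def by auto
  have sn: "sum_list (map fst n_as) = n" using c(1) unfolding Jm_def carrier_mat_def by simp
  define P Q J where "P i j = Pm $$ (i,j)" and "Q i j = Qm $$ (i,j)" and "J i j = Jm $$ (i,j)"
    for i j
  have "mat_agree n (mmult n P Q) idm" "mat_agree n (mmult n Q P) idm"
    using mmult_index_mat[OF c(2,3)] mmult_index_mat[OF c(3,2)] pq qp unfolding P_def Q_def
    by (auto simp: mat_agree_def idm_def)
  moreover have "mat_agree n D (mmult n P (mmult n J Q))"
  proof -
    have "Dm = Pm * (Jm * Qm)" using dj c by (simp add: assoc_mult_mat[of _ n n _ n _ n])
    hence "mat_agree n D (\<lambda>i j. (Pm * (Jm * Qm)) $$ (i,j))"
      unfolding mat_agree_def Dm_def by (metis index_mat(1) case_prod_conv)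
    moreover have "mat_agree n (mmult n P (mmult n J Q)) (\<lambda>i j. (Pm * (Jm * Qm)) $$ (i,j))"
      using mat_agree_trans[OF mmult_mat_cong[OF _ mmult_index_mat[OF c(1,3)]]
          mmult_index_mat[OF c(2) mult_carrier_mat[OF c(1,3)]]]
      unfolding P_def J_def Q_def by (simp add: mat_agree_def)
    ultimately show ?thesis using mat_agree_sym mat_agree_trans by blast
  qed
  moreover have "jordan_like n J" unfolding jordan_like_def J_def Jm_def
    using jordan_matrix_upper_triangular[of _ n_as] jordan_matrix_offdiag_same_diag[of _ n_as] sn
    by auto
  ultimately show ?thesis using that by blast
qed

lemma jordan_like_derivation_eigenvalue_sum:
  assumes J: "jordan_like n J" and der: "sc_derivation n c J"
    and ijl: "i < n" "j < n" "l < n" "J l l \<noteq> J i i + J j j"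
  shows "c i j l = 0"
proof -
  have "agree n ((mshift n J (J i i + J j j) ^^ (n+n)) (sc_mult n c (delta_vec i) (delta_vec j)))
      (\<lambda>k. 0)"
    by (rule sc_derivation_gen_eigvec_mult[OF der jordan_like_gen_eigvec_delta[OF J ijl(1)]
          jordan_like_gen_eigvec_delta[OF J ijl(2)]])
  from jordan_like_gen_eigvec_support[OF J this] ijl
  have "sc_mult n c (delta_vec i) (delta_vec j) l = 0" by blast
  thus ?thesis using sc_mult_delta ijl by metis
qed

text \<open>By the eigenvalue-sum rule, any additive function of the eigenvalues, here complex
  conjugation, placed on the diagonal is again a derivation.\<close>
lemma jordan_like_derivation_diag_cnj:
  assumes J: "jordan_like n J" and der: "sc_derivation n c J"
  shows "sc_derivation n c (\<lambda>i j. if i = j then cnj (J i i) else 0)"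
  unfolding sc_derivation_iff_coeffs
proof (intro allI impI)
  fix i j l assume ijl: "i < n" "j < n" "l < n"
  let ?E = "\<lambda>i j. if i = j then cnj (J i i) else 0"
  have diag_right: "(\<Sum>k<n. f k * ?E m k) = f m * cnj (J m m)" if "m < n" for f m
  proof -
    have "(\<Sum>k<n. f k * ?E m k) = (\<Sum>k<n. if k = m then f m * cnj (J m m) else 0)"
      by (rule sum.cong) auto
    also have "\<dots> = f m * cnj (J m m)" using that by simp
    finally show ?thesis .
  qed
  have diag_left: "(\<Sum>k<n. ?E k m * f k) = cnj (J m m) * f m" if "m < n" for f m
  proof -
    have "(\<Sum>k<n. ?E k m * f k) = (\<Sum>k<n. if k = m then cnj (J m m) * f m else 0)"
      by (rule sum.cong) auto
    also have "\<dots> = cnj (J m m) * f m" using that by simp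
    finally show ?thesis .
  qed
  show "(\<Sum>k<n. c i j k * ?E l k) = (\<Sum>m<n. ?E m i * c m j l) + (\<Sum>m<n. ?E m j * c i m l)"
    unfolding diag_right[OF ijl(3)] diag_left[OF ijl(1)] diag_left[OF ijl(2)]
    using jordan_like_derivation_eigenvalue_sum[OF J der ijl]
    by (cases "J l l = J i i + J j j") (simp_all add: algebra_simps)
qed

lemma mtrace_mult_diag_cnj:
  "mtrace n (mmult n J (\<lambda>i j. if i = j then cnj (J i i) else 0)) = (\<Sum>i<n. J i i * cnj (J i i))"
  unfolding mtrace_def mmult_def by (simp add: if_distrib sum.delta cong: if_cong)

lemma sum_mult_cnj_eq_0:
  fixes n :: nat
  assumes "(\<Sum>i<n. z i * cnj (z i)) = 0" "i < n" shows "z i = 0"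
proof -
  let ?g = "\<lambda>i. (Re (z i))\<^sup>2 + (Im (z i))\<^sup>2"
  have "complex_of_real (\<Sum>i<n. ?g i) = 0" using assms(1) by (simp add: complex_mult_cnj)
  hence "(\<Sum>i<n. ?g i) = 0" by (simp only: of_real_eq_0_iff)
  moreover have "(\<Sum>i<n. ?g i) = 0 \<longleftrightarrow> (\<forall>i\<in>{..<n}. ?g i = 0)"
    by (rule sum_nonneg_eq_0_iff) simp_all
  ultimately have "?g i = 0" using assms(2) by simp
  thus ?thesis by (simp add: complex_eq_iff add_nonneg_eq_0_iff)
qed

lemma mapply_pow_similar:
  assumes PQ: "mat_agree n (mmult n P Q) idm" and QP: "mat_agree n (mmult n Q P) idm"
    and D: "mat_agree n D (mmult n P (mmult n J Q))"
  shows "agree n ((mapply n D ^^ m) u) (mapply n P ((mapply n J ^^ m) (mapply n Q u)))"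
proof (induction m)
  case 0
  show ?case using agree_trans[OF mapply_mat_cong[OF PQ] mapply_idm]
    by (simp add: mapply_mmult agree_sym)
next
  case (Suc m)
  let ?v = "(mapply n J ^^ m) (mapply n Q u)"
  have QPv: "agree n (mapply n Q (mapply n P ?v)) ?v"
    using agree_trans[OF mapply_mat_cong[OF QP] mapply_idm] by (simp add: mapply_mmult)
  have "(mapply n D ^^ Suc m) u = mapply n D (mapply n P ?v)"
    using mapply_cong[OF Suc.IH] by simp
  moreover have "agree n (mapply n D (mapply n P ?v)) (mapply n P (mapply n J (mapply n Q (mapply n P ?v))))"
    using mapply_mat_cong[OF D] by (simp add: mapply_mmult)
  moreover have "mapply n J (mapply n Q (mapply n P ?v)) = mapply n J ?v" by (rule mapply_cong[OF QPv])
  ultimately show ?case by simp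
qed

lemma mat_agree_similar_cancel:
  assumes QP: "mat_agree n (mmult n Q P) idm"
  shows "mat_agree n (mmult n Q (mmult n (mmult n P (mmult n J Q)) P)) J"
proof -
  have "mmult n Q (mmult n (mmult n P (mmult n J Q)) P) = mmult n (mmult n Q P) (mmult n J (mmult n Q P))"
    by (simp only: mmult_assoc)
  moreover have "mat_agree n (mmult n (mmult n Q P) (mmult n J (mmult n Q P))) (mmult n idm (mmult n J idm))"
    by (intro mmult_mat_cong QP) (simp_all add: mat_agree_def)
  moreover have "mat_agree n (mmult n idm (mmult n J idm)) J"
    using mat_agree_trans[OF mmult_idm_left mmult_idm_right] .
  ultimately show ?thesis using mat_agree_trans by metis
qed

text \<open>In Jordan form the diagonal of \<open>D\<close> can be replaced by its complex conjugate without
  leaving the derivations, and the trace of the product with that derivation is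
  \<open>\<Sum> |\<lambda>\<^sub>i|\<^sup>2\<close>.\<close>
theorem sc_derivation_trace_orthogonal_nilpotent:
  assumes der: "sc_derivation n c D"
    and orth: "\<forall>E. sc_derivation n c E \<longrightarrow> mtrace n (mmult n D E) = 0"
  shows "agree n ((mapply n D ^^ n) u) (\<lambda>k. 0)"
proof -
  obtain P Q J where PQ: "mat_agree n (mmult n P Q) idm" and QP: "mat_agree n (mmult n Q P) idm"
    and D: "mat_agree n D (mmult n P (mmult n J Q))" and J: "jordan_like n J"
    by (rule jordan_like_similar)
  let ?c' = "sc_transport n c P Q" and ?E = "\<lambda>i j. if i = j then cnj (J i i) else 0"
  have "mat_agree n (mmult n Q (mmult n D P)) J"
    using mat_agree_trans[OF mmult_mat_cong[OF _ mmult_mat_cong[OF D]] mat_agree_similar_cancel[OF QP]]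
    by (simp add: mat_agree_def)
  hence derJ: "sc_derivation n ?c' J"
    using sc_derivation_mat_cong sc_derivation_transport[OF PQ der] by blast
  have "sc_derivation n c (mmult n P (mmult n ?E Q))"
    by (rule sc_derivation_transport_back[OF PQ jordan_like_derivation_diag_cnj[OF J derJ]])
  hence "0 = mtrace n (mmult n D (mmult n P (mmult n ?E Q)))" using orth by simp
  also have "\<dots> = mtrace n (mmult n (mmult n P (mmult n J Q)) (mmult n P (mmult n ?E Q)))"
    by (intro mtrace_mat_cong mmult_mat_cong D mat_agree_refl)
  also have "\<dots> = (\<Sum>i<n. J i i * cnj (J i i))"
    by (simp only: mtrace_similar[OF QP] mtrace_mult_diag_cnj)
  finally have "\<forall>i<n. J i i = 0" using sum_mult_cnj_eq_0 by metis
  hence "agree n ((mapply n J ^^ n) (mapply n Q u)) (\<lambda>k. 0)" by (rule jordan_like_nilpotent[OF J])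
  hence "mapply n P ((mapply n J ^^ n) (mapply n Q u)) = mapply n P (\<lambda>k. 0)" by (rule mapply_cong)
  thus ?thesis using mapply_pow_similar[OF PQ QP D, of n u] by (simp add: mapply_zero agree_def)
qed

section \<open>Semisimple Lie algebras are unimodular\<close>

definition ad_trace :: "('a::euclidean_space \<Rightarrow> 'a \<Rightarrow> 'a) \<Rightarrow> 'a \<Rightarrow> real" where
  "ad_trace B x = (\<Sum>b\<in>Basis. B x b \<bullet> b)"

definition unimodular :: "('a::euclidean_space \<Rightarrow> 'a \<Rightarrow> 'a) \<Rightarrow> bool" where
  "unimodular B \<longleftrightarrow> (\<forall>x. ad_trace B x = 0)"

lemma linear_ad_trace: "lie_algebra B \<Longrightarrow> linear (ad_trace B)"
  unfolding ad_trace_def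
  by (rule linearI) (simp_all add: bilinear_ladd bilinear_lmul lie_algebra_bilinear inner_add_left
      sum.distrib sum_distrib_left)

lemma sum_distinct_list: "distinct bs \<Longrightarrow> sum f (set bs) = (\<Sum>i<length bs. f (bs ! i))"
proof -
  assume d: "distinct bs"
  have "set bs = (\<lambda>i. bs ! i) ` {..<length bs}" by (auto simp: set_conv_nth)
  moreover have "inj_on (\<lambda>i. bs ! i) {..<length bs}" using d by (simp add: inj_on_nth)
  ultimately show ?thesis by (simp add: sum.reindex)
qed

locale lie_algebra_basis =
  fixes B :: "'a::euclidean_space \<Rightarrow> 'a \<Rightarrow> 'a" and bs :: "'a list"
  assumes lie: "lie_algebra B" and distinct_bs: "distinct bs" and set_bs: "set bs = Basis"
begin

abbreviation nb where "nb \<equiv> length bs"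

definition coords :: "'a \<Rightarrow> cvec" where
  "coords x i = complex_of_real (x \<bullet> bs!i)"

definition struct_const :: sconst where
  "struct_const i j k = complex_of_real (B (bs!i) (bs!j) \<bullet> bs!k)"

definition ad_mat :: "'a \<Rightarrow> cmat" where
  "ad_mat x i k = (if i < nb \<and> k < nb then complex_of_real (B x (bs!k) \<bullet> bs!i) else 0)"

definition killing :: "'a \<Rightarrow> 'a \<Rightarrow> complex" where
  "killing a b = mtrace nb (mmult nb (ad_mat a) (ad_mat b))"

definition killing_radical :: "'a set" where
  "killing_radical = {a. \<forall>b. killing a b = 0}"

lemma linear_B: "linear (B x)"
  by (rule lie_algebra_linear_right[OF lie])

lemma linear_B_left: "linear (\<lambda>x. B x y)"
  by (rule lie_algebra_linear_left[OF lie])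

lemma sum_Basis_bs: "sum f Basis = (\<Sum>i<nb. f (bs ! i))"
  using sum_distinct_list[OF distinct_bs, of f] set_bs by simp

lemma inner_bs: "i < nb \<Longrightarrow> j < nb \<Longrightarrow> bs!i \<bullet> bs!j = (if i = j then 1 else 0)"
  using distinct_bs set_bs nth_mem[of i bs] nth_mem[of j bs]
  by (auto simp: inner_Basis nth_eq_iff_index_eq)

lemma bs_expansion: "x = (\<Sum>i<nb. (x \<bullet> bs!i) *\<^sub>R bs!i)"
  using euclidean_representation[of x] sum_Basis_bs[of "\<lambda>b. (x \<bullet> b) *\<^sub>R b"] by simp

lemma inner_bs_expansion: "j < nb \<Longrightarrow> (\<Sum>k<nb. f k *\<^sub>R bs!k) \<bullet> bs!j = f j"
  by (simp add: inner_sum_left inner_bs if_distrib sum.delta cong: if_cong)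

lemma coords_zero: "(\<forall>i<nb. x \<bullet> bs!i = 0) \<Longrightarrow> x = 0"
  using bs_expansion[of x] by simp

lemma linear_coord_expansion:
  "linear T \<Longrightarrow> T y \<bullet> bs!l = (\<Sum>k<nb. (y \<bullet> bs!k) * (T (bs!k) \<bullet> bs!l))"
proof -
  assume T: "linear T"
  have "T y = T (\<Sum>k<nb. (y \<bullet> bs!k) *\<^sub>R bs!k)" using bs_expansion by metis
  also have "\<dots> = (\<Sum>k<nb. (y \<bullet> bs!k) *\<^sub>R T (bs!k))"
    by (simp add: linear_sum[OF T] linear_scale[OF T])
  finally show ?thesis by (simp add: inner_sum_left)
qed

lemma bracket_coord_left: "B y z \<bullet> bs!l = (\<Sum>k<nb. (y \<bullet> bs!k) * (B (bs!k) z \<bullet> bs!l))"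
  using linear_coord_expansion[OF linear_B_left[of z], of y l] by simp

lemma ad_mat_bracket: "ad_mat (B x y) = (\<lambda>i k. mmult nb (ad_mat x) (ad_mat y) i k - mmult nb (ad_mat y) (ad_mat x) i k)"
proof (intro ext)
  fix i k
  show "ad_mat (B x y) i k = mmult nb (ad_mat x) (ad_mat y) i k - mmult nb (ad_mat y) (ad_mat x) i k"
  proof (cases "i < nb \<and> k < nb")
    case True
    have "B (B x y) (bs!k) = B x (B y (bs!k)) - B y (B x (bs!k))"
      using lie_algebra_leibniz[OF lie, of x y "bs!k"] by simp
    moreover have "mmult nb (ad_mat x) (ad_mat y) i k = complex_of_real (B x (B y (bs!k)) \<bullet> bs!i)"
      "mmult nb (ad_mat y) (ad_mat x) i k = complex_of_real (B y (B x (bs!k)) \<bullet> bs!i)"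
      unfolding mmult_def linear_coord_expansion[OF linear_B, of x "B y (bs!k)" i]
        linear_coord_expansion[OF linear_B, of y "B x (bs!k)" i]
      using True by (simp_all add: ad_mat_def mult.commute)
    ultimately show ?thesis using True unfolding ad_mat_def by (simp add: inner_diff_left)
  qed (auto simp: mmult_def ad_mat_def)
qed

lemma ad_mat_add: "ad_mat (x + y) = (\<lambda>i k. ad_mat x i k + ad_mat y i k)"
  unfolding ad_mat_def by (intro ext) (simp add: linear_add[OF linear_B_left] inner_add_left)

lemma ad_mat_scale: "ad_mat (r *\<^sub>R x) = (\<lambda>i k. complex_of_real r * ad_mat x i k)"
  unfolding ad_mat_def by (intro ext) (simp add: linear_scale[OF linear_B_left])

lemma ad_mat_coords:
  "i < nb \<Longrightarrow> k < nb \<Longrightarrow> ad_mat x i k = (\<Sum>m<nb. coords x m * struct_const m k i)"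
  unfolding ad_mat_def coords_def struct_const_def using bracket_coord_left[of x "bs!k" i] by simp

lemma ad_mat_bs: "i < nb \<Longrightarrow> k < nb \<Longrightarrow> m < nb \<Longrightarrow> ad_mat (bs!m) i k = struct_const m k i"
  unfolding ad_mat_def struct_const_def by simp

lemma ad_mat_derivation: "sc_derivation nb struct_const (ad_mat x)"
  unfolding sc_derivation_iff_coeffs
proof (intro allI impI)
  fix i j l assume ijl: "i < nb" "j < nb" "l < nb"
  have "(\<Sum>k<nb. struct_const i j k * ad_mat x l k) = complex_of_real (B x (B (bs!i) (bs!j)) \<bullet> bs!l)"
    using linear_coord_expansion[OF linear_B, of x "B (bs!i) (bs!j)" l] ijl
    by (simp add: struct_const_def ad_mat_def)
  moreover have "(\<Sum>m<nb. ad_mat x m i * struct_const m j l) = complex_of_real (B (B x (bs!i)) (bs!j) \<bullet> bs!l)"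
    using bracket_coord_left[of "B x (bs!i)" "bs!j" l] ijl by (simp add: struct_const_def ad_mat_def)
  moreover have "(\<Sum>m<nb. ad_mat x m j * struct_const i m l) = complex_of_real (B (bs!i) (B x (bs!j)) \<bullet> bs!l)"
    using linear_coord_expansion[OF linear_B, of "bs!i" "B x (bs!j)" l] ijl
    by (simp add: struct_const_def ad_mat_def)
  ultimately show "(\<Sum>k<nb. struct_const i j k * ad_mat x l k) =
      (\<Sum>m<nb. ad_mat x m i * struct_const m j l) + (\<Sum>m<nb. ad_mat x m j * struct_const i m l)"
    unfolding lie_algebra_leibniz[OF lie, of x "bs!i" "bs!j"] by (simp add: inner_add_left)
qed

lemma mapply_ad_mat_pow: "agree nb ((mapply nb (ad_mat x) ^^ m) (coords v)) (coords ((B x ^^ m) v))"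
proof (induction m)
  case (Suc m)
  have "agree nb (mapply nb (ad_mat x) (coords w)) (coords (B x w))" for w
    unfolding agree_def mapply_def coords_def
    using linear_coord_expansion[OF linear_B, of x w] by (simp add: ad_mat_def mult.commute)
  thus ?case using mapply_cong[OF Suc.IH] by simp
qed simp

lemma killing_add_left: "killing (x + y) b = killing x b + killing y b"
  unfolding killing_def ad_mat_add by (simp add: mmult_add_left mtrace_add)

lemma killing_scale_left: "killing (r *\<^sub>R x) b = complex_of_real r * killing x b"
  unfolding killing_def ad_mat_scale by (simp add: mmult_smult_left mtrace_smult)

lemma killing_add_right: "killing a (x + y) = killing a x + killing a y"
  unfolding killing_def ad_mat_add by (simp add: mmult_add_right mtrace_add)

lemma killing_scale_right: "killing a (r *\<^sub>R x) = complex_of_real r * killing a x"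
  unfolding killing_def ad_mat_scale by (simp add: mmult_smult_right mtrace_smult)

lemma killing_invariant: "killing (B y a) b = killing a (B b y)"
proof -
  have "killing (B y a) b = mtrace nb (mmult nb (mmult nb (ad_mat y) (ad_mat a)) (ad_mat b)) -
      mtrace nb (mmult nb (mmult nb (ad_mat a) (ad_mat y)) (ad_mat b))"
    unfolding killing_def ad_mat_bracket by (simp add: mmult_diff_left mtrace_diff)
  also have "\<dots> = mtrace nb (mmult nb (ad_mat a) (mmult nb (ad_mat b) (ad_mat y))) -
      mtrace nb (mmult nb (ad_mat a) (mmult nb (ad_mat y) (ad_mat b)))"
    by (simp only: mtrace_mmult_rotate[of nb "ad_mat y"] mmult_assoc[of nb "ad_mat a"])
  also have "\<dots> = killing a (B b y)"
    unfolding killing_def ad_mat_bracket by (simp add: mmult_diff_right mtrace_diff)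
  finally show ?thesis .
qed

lemma killing_real: "complex_of_real (Re (killing a b)) = killing a b"
proof -
  have "killing a b = complex_of_real (\<Sum>i<nb. \<Sum>k<nb. Re (ad_mat a i k) * Re (ad_mat b k i))"
    unfolding killing_def mtrace_def mmult_def by (simp add: ad_mat_def)
  thus ?thesis by simp
qed

lemma killing_expansion_right:
  "killing a b = (\<Sum>k<nb. complex_of_real (b \<bullet> bs!k) * killing a (bs!k))"
proof -
  have sum: "killing a (\<Sum>k\<in>K. f k) = (\<Sum>k\<in>K. killing a (f k))" if "finite K" for K f
    using that by (induction K rule: finite_induct)
      (simp_all add: killing_add_right killing_scale_right[of a 0 0, simplified])
  show ?thesis
    by (subst bs_expansion[of b]) (simp add: sum killing_scale_right)
qed

lemma mtrace_ad_mat: "mtrace nb (ad_mat y) = complex_of_real (ad_trace B y)"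
  unfolding mtrace_def ad_trace_def sum_Basis_bs by (simp add: ad_mat_def)

text \<open>The right-hand side is the matrix of \<open>ad (E b)\<close>.\<close>
lemma derivation_commutator_ad_mat:
  assumes E: "sc_derivation nb struct_const E" and lk: "l < nb" "k < nb"
  shows "mmult nb E (ad_mat b) l k - mmult nb (ad_mat b) E l k =
    (\<Sum>r<nb. mapply nb E (coords b) r * struct_const r k l)"
proof -
  let ?c = "struct_const"
  have "mmult nb E (ad_mat b) l k = (\<Sum>q<nb. E l q * (\<Sum>m<nb. coords b m * ?c m k q))"
    unfolding mmult_def using lk ad_mat_coords by (intro sum.cong) auto
  also have "\<dots> = (\<Sum>m<nb. coords b m * (\<Sum>q<nb. ?c m k q * E l q))"
    by (simp add: sum_distrib_left mult_ac, rule sum.swap)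
  also have "\<dots> = (\<Sum>m<nb. coords b m * ((\<Sum>r<nb. E r m * ?c r k l) + (\<Sum>r<nb. E r k * ?c m r l)))"
    using E lk unfolding sc_derivation_iff_coeffs by (intro sum.cong) auto
  also have "\<dots> = (\<Sum>m<nb. \<Sum>r<nb. coords b m * E r m * ?c r k l) +
      (\<Sum>m<nb. \<Sum>r<nb. coords b m * E r k * ?c m r l)"
    by (simp add: distrib_left sum.distrib sum_distrib_left mult_ac)
  finally have 1: "mmult nb E (ad_mat b) l k = \<dots>" .
  have "mmult nb (ad_mat b) E l k = (\<Sum>r<nb. (\<Sum>m<nb. coords b m * ?c m r l) * E r k)"
    unfolding mmult_def using lk ad_mat_coords by (intro sum.cong) auto
  also have "\<dots> = (\<Sum>r<nb. \<Sum>m<nb. coords b m * E r k * ?c m r l)"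
    by (simp add: sum_distrib_right mult_ac sum_distrib_left)
  also have "\<dots> = (\<Sum>m<nb. \<Sum>r<nb. coords b m * E r k * ?c m r l)" by (rule sum.swap)
  finally have 2: "mmult nb (ad_mat b) E l k = \<dots>" .
  have "(\<Sum>r<nb. mapply nb E (coords b) r * ?c r k l) = (\<Sum>r<nb. \<Sum>m<nb. E r m * coords b m * ?c r k l)"
    unfolding mapply_def by (simp add: sum_distrib_right)
  also have "\<dots> = (\<Sum>m<nb. \<Sum>r<nb. coords b m * E r m * ?c r k l)"
    by (subst sum.swap) (simp add: mult_ac)
  finally show ?thesis using 1 2 by simp
qed

text \<open>Cartan's trick: invariance of the Killing form moves \<open>ad a\<close> past the commutator
  \<open>[ad b, E] = -ad (E b)\<close>, leaving Killing products of \<open>a\<close>.\<close>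
lemma killing_radical_trace:
  assumes a: "a \<in> killing_radical" and E: "sc_derivation nb struct_const E"
  shows "mtrace nb (mmult nb (ad_mat (B a b)) E) = 0"
proof -
  define w where "w = mapply nb E (coords b)"
  let ?A = "ad_mat a" and ?Bm = "ad_mat b"
  have "mtrace nb (mmult nb (ad_mat (B a b)) E) =
      mtrace nb (mmult nb ?A (\<lambda>l k. mmult nb ?Bm E l k - mmult nb E ?Bm l k))"
    unfolding ad_mat_bracket mmult_diff_left mmult_diff_right mtrace_diff
    by (simp only: mtrace_mmult_rotate[of nb ?Bm ?A E]) (simp only: mmult_assoc)
  also have "\<dots> = mtrace nb (mmult nb ?A (\<lambda>l k. (-1) * (\<Sum>r<nb. w r * ad_mat (bs!r) l k)))"
  proof (intro mtrace_mat_cong mmult_mat_cong mat_agree_refl, unfold mat_agree_def, intro allI impI)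
    fix l k assume lk: "l < nb" "k < nb"
    have "(\<Sum>r<nb. w r * ad_mat (bs!r) l k) = (\<Sum>r<nb. w r * struct_const r k l)"
      using lk ad_mat_bs by (intro sum.cong) auto
    hence "mmult nb E ?Bm l k - mmult nb ?Bm E l k = (\<Sum>r<nb. w r * ad_mat (bs!r) l k)"
      using derivation_commutator_ad_mat[OF E lk, of b] unfolding w_def by simp
    thus "mmult nb ?Bm E l k - mmult nb E ?Bm l k = (-1) * (\<Sum>r<nb. w r * ad_mat (bs!r) l k)"
      by (metis minus_diff_eq mult_minus1)
  qed
  also have "\<dots> = (-1) * (\<Sum>r<nb. w r * killing a (bs!r))"
    unfolding mmult_smult_right mtrace_smult mtrace_mmult_sum killing_def ..
  finally show ?thesis using a unfolding killing_radical_def by simp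
qed

lemma killing_radical_ideal: "lie_ideal B killing_radical"
  unfolding lie_ideal_def killing_radical_def real_vector.subspace_def
  using killing_scale_left[of 0 0] by (simp add: killing_add_left killing_scale_left killing_invariant)

definition radical_bracket :: "'a set" where
  "radical_bracket = span {B a b | a b. a \<in> killing_radical}"

lemma radical_bracket_ideal: "lie_ideal B radical_bracket"
proof -
  have "B y ` {B a b | a b. a \<in> killing_radical} \<subseteq> radical_bracket" for y
  proof
    fix z assume "z \<in> B y ` {B a b | a b. a \<in> killing_radical}"
    then obtain a b where ab: "a \<in> killing_radical" "z = B y (B a b)" by blast
    have "B y a \<in> killing_radical" using killing_radical_ideal ab(1) by (simp add: lie_ideal_def)
    hence "B (B y a) b \<in> radical_bracket" "B a (B y b) \<in> radical_bracket"
      using ab(1) unfolding radical_bracket_def by (auto intro: span_base)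
    thus "z \<in> radical_bracket"
      using ab(2) lie_algebra_leibniz[OF lie, of y a b] unfolding radical_bracket_def
      by (simp add: span_add)
  qed
  hence "span (B y ` {B a b | a b. a \<in> killing_radical}) \<subseteq> radical_bracket" for y
    unfolding radical_bracket_def by (simp add: span_minimal)
  hence "B y ` radical_bracket \<subseteq> radical_bracket" for y
    unfolding radical_bracket_def span_linear_image[OF linear_B] by simp
  thus ?thesis unfolding lie_ideal_def radical_bracket_def by auto
qed

lemma radical_bracket_trace:
  assumes x: "x \<in> radical_bracket" and E: "sc_derivation nb struct_const E"
  shows "mtrace nb (mmult nb (ad_mat x) E) = 0"
  using x[unfolded radical_bracket_def]
proof (induction rule: span_induct)
  case base
  have add: "mtrace nb (mmult nb (ad_mat (p + q)) E) =
      mtrace nb (mmult nb (ad_mat p) E) + mtrace nb (mmult nb (ad_mat q) E)" for p q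
    unfolding ad_mat_add mmult_add_left mtrace_add ..
  have scale: "mtrace nb (mmult nb (ad_mat (r *\<^sub>R p)) E) =
      complex_of_real r * mtrace nb (mmult nb (ad_mat p) E)" for r p
    unfolding ad_mat_scale mmult_smult_left mtrace_smult ..
  show ?case unfolding real_vector.subspace_def using scale[of 0 0] by (auto simp: add scale)
next
  case (step z)
  thus ?case using killing_radical_trace[OF _ E] by blast
qed

lemma radical_bracket_ad_nilpotent: "x \<in> radical_bracket \<Longrightarrow> (B x ^^ nb) v = 0"
proof -
  assume x: "x \<in> radical_bracket"
  have "agree nb ((mapply nb (ad_mat x) ^^ nb) (coords v)) (\<lambda>k. 0)"
    using sc_derivation_trace_orthogonal_nilpotent[OF ad_mat_derivation] radical_bracket_trace[OF x]
    by blast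
  hence "\<forall>i<nb. (B x ^^ nb) v \<bullet> bs!i = 0"
    using mapply_ad_mat_pow[where x = x and m = nb and v = v] unfolding agree_def coords_def by simp
  thus ?thesis by (rule coords_zero)
qed

lemma killing_radical_zero:
  assumes no_solvable: "\<forall>I. solvable_ideal B I \<longrightarrow> I = {0}"
  shows "killing_radical = {0}"
proof -
  have "radical_bracket = {0}"
    using ad_nilpotent_ideal_zero[OF lie no_solvable radical_bracket_ideal]
      radical_bracket_ad_nilpotent by blast
  hence "B a b = 0" if "a \<in> killing_radical" for a b
    using that span_base[of "B a b" "{B a b | a b. a \<in> killing_radical}"]
    unfolding radical_bracket_def by blast
  hence "solvable_ideal B killing_radical"
    by (intro abelian_ideal_solvable killing_radical_ideal) blast
  thus ?thesis using no_solvable by blast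
qed

lemma killing_represents:
  assumes rad: "killing_radical = {0}" and \<phi>: "linear \<phi>"
  shows "\<exists>z. \<forall>b. killing z b = complex_of_real (\<phi> b)"
proof -
  define K where "K a = (\<Sum>k<nb. Re (killing a (bs!k)) *\<^sub>R bs!k)" for a
  have linK: "linear K"
    by (rule linearI) (simp_all add: K_def killing_add_left killing_scale_left scaleR_add_left
        sum.distrib scaleR_sum_right)
  have "inj K" unfolding linear_injective_0[OF linK]
  proof (intro allI impI)
    fix a assume "K a = 0"
    hence "Re (killing a (bs!j)) = 0" if "j < nb" for j
      using inner_bs_expansion[OF that, of "\<lambda>k. Re (killing a (bs!k))"] unfolding K_def by simp
    hence "killing a (bs!j) = 0" if "j < nb" for j using killing_real[of a "bs!j"] that by simp
    hence "killing a b = 0" for b by (subst killing_expansion_right) (auto intro!: sum.neutral)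
    hence "a \<in> killing_radical" unfolding killing_radical_def by simp
    thus "a = 0" using rad by simp
  qed
  hence "surj K" by (rule eucl.linear_injective_imp_surjective[OF linK]) simp
  then obtain z where z: "K z = (\<Sum>k<nb. \<phi> (bs!k) *\<^sub>R bs!k)" by (metis surjD)
  have zj: "killing z (bs!j) = complex_of_real (\<phi> (bs!j))" if "j < nb" for j
    using arg_cong[OF z, of "\<lambda>v. v \<bullet> bs!j"] inner_bs_expansion[OF that] killing_real[of z "bs!j"]
    unfolding K_def by metis
  have "killing z b = complex_of_real (\<phi> b)" for b
  proof -
    have "killing z b = (\<Sum>k<nb. complex_of_real ((b \<bullet> bs!k) * \<phi> (bs!k)))"
      by (subst killing_expansion_right) (simp add: zj)
    also have "\<dots> = complex_of_real (\<phi> (\<Sum>k<nb. (b \<bullet> bs!k) *\<^sub>R bs!k))"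
      by (simp add: linear_sum[OF \<phi>] linear_scale[OF \<phi>])
    finally show ?thesis by (simp flip: bs_expansion)
  qed
  thus ?thesis by blast
qed

lemma ad_trace_bracket: "ad_trace B (B y b) = 0"
proof -
  have "complex_of_real (ad_trace B (B y b)) = 0"
    unfolding mtrace_ad_mat[symmetric] ad_mat_bracket mtrace_diff
    using mtrace_mmult_commute[of nb "ad_mat y" "ad_mat b"] by simp
  thus ?thesis by simp
qed

text \<open>The ad-trace is the Killing product with some \<open>z\<close>; it vanishes on brackets, so by
  invariance \<open>[z, y]\<close> lies in the Killing radical, hence \<open>z\<close> is central and therefore zero.\<close>
lemma semisimple_ad_trace_zero:
  assumes ss: "semisimple B"
  shows "ad_trace B y = 0"
proof -
  have no_solvable: "\<forall>I. solvable_ideal B I \<longrightarrow> I = {0}" using ss by (simp add: semisimple_def)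
  obtain z where z: "\<And>b. killing z b = complex_of_real (ad_trace B b)"
    using killing_represents[OF killing_radical_zero[OF no_solvable] linear_ad_trace[OF lie]] by blast
  have "killing (B z x) b = 0" for x b
    using lie_algebra_antisym[OF lie, of z x] killing_scale_left[of "-1" "B x z" b]
    by (simp add: killing_invariant z ad_trace_bracket)
  hence "B z x = 0" for x
    using killing_radical_zero[OF no_solvable] unfolding killing_radical_def by blast
  hence "z = 0" by (intro central_element_zero[OF ss]) blast
  thus ?thesis using z[of y] killing_scale_left[of 0 0 y] by simp
qed

end

lemma semisimple_unimodular:
  fixes B :: "'a::euclidean_space \<Rightarrow> 'a \<Rightarrow> 'a"
  assumes "semisimple B"
  shows "unimodular B"
proof -
  obtain bs :: "'a list" where "distinct bs" "set bs = Basis"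
    using finite_distinct_list[OF finite_Basis] by metis
  moreover have "lie_algebra B" using assms by (simp add: semisimple_def)
  ultimately interpret lie_algebra_basis B bs by unfold_locales
  show ?thesis unfolding unimodular_def using semisimple_ad_trace_zero[OF assms] by blast
qed

section \<open>Contractions preserve unimodularity\<close>

lemma linear_inv_bij:
  assumes f: "linear f" and b: "bij f"
  shows "linear (inv_into UNIV f)"
proof -
  have fi: "f (inv_into UNIV f y) = y" "inv_into UNIV f (f x) = x" for x y
    using b by (simp_all add: bij_is_surj surj_f_inv_f bij_is_inj)
  show ?thesis
    by (rule linearI) (metis fi linear_add[OF f], metis fi linear_scale[OF f])
qed

lemma trace_similarity_invariant:
  fixes h :: "'b::euclidean_space \<Rightarrow> 'a::euclidean_space" and hi :: "'a \<Rightarrow> 'b" and g :: "'a \<Rightarrow> 'a"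
  assumes h: "linear h" and hi: "linear hi" and g: "linear g" and hh: "\<forall>y. h (hi y) = y"
  shows "(\<Sum>b\<in>Basis. hi (g (h b)) \<bullet> b) = (\<Sum>a\<in>Basis. g a \<bullet> a)"
proof -
  have 1: "hi (g (h b)) \<bullet> b = (\<Sum>a\<in>Basis. (h b \<bullet> a) * (hi (g a) \<bullet> b))" for b
  proof -
    have "h b = (\<Sum>a\<in>Basis. (h b \<bullet> a) *\<^sub>R a)" by (simp add: euclidean_representation)
    hence "hi (g (h b)) = hi (g (\<Sum>a\<in>Basis. (h b \<bullet> a) *\<^sub>R a))" by simp
    also have "\<dots> = (\<Sum>a\<in>Basis. (h b \<bullet> a) *\<^sub>R hi (g a))"
      by (simp add: linear_sum[OF g] linear_scale[OF g] linear_sum[OF hi] linear_scale[OF hi])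
    finally show ?thesis by (simp add: inner_sum_left)
  qed
  have 2: "(\<Sum>b\<in>Basis. (hi (g a) \<bullet> b) * (h b \<bullet> a)) = g a \<bullet> a" for a
  proof -
    have "(\<Sum>b\<in>Basis. (hi (g a) \<bullet> b) * (h b \<bullet> a)) = h (\<Sum>b\<in>Basis. (hi (g a) \<bullet> b) *\<^sub>R b) \<bullet> a"
      by (simp add: linear_sum[OF h] linear_scale[OF h] inner_sum_left)
    also have "(\<Sum>b\<in>Basis. (hi (g a) \<bullet> b) *\<^sub>R b) = hi (g a)" by (simp add: euclidean_representation)
    finally show ?thesis using hh by simp
  qed
  have "(\<Sum>b\<in>Basis. hi (g (h b)) \<bullet> b) = (\<Sum>b\<in>Basis. \<Sum>a\<in>Basis. (h b \<bullet> a) * (hi (g a) \<bullet> b))"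
    using 1 by simp
  also have "\<dots> = (\<Sum>a\<in>Basis. \<Sum>b\<in>Basis. (hi (g a) \<bullet> b) * (h b \<bullet> a))"
    by (subst sum.swap) (simp add: mult.commute)
  also have "\<dots> = (\<Sum>a\<in>Basis. g a \<bullet> a)" using 2 by simp
  finally show ?thesis .
qed

lemma unimodular_contraction_limit:
  fixes B0 :: "'a::euclidean_space \<Rightarrow> 'a \<Rightarrow> 'a"
  assumes uni: "unimodular B0" and lin: "\<And>x. linear (B0 x)" and lim: "contraction_limit B0 B1"
  shows "unimodular B1"
  unfolding unimodular_def ad_trace_def
proof
  fix X
  obtain \<Phi> :: "real \<Rightarrow> 'a \<Rightarrow> 'a" where \<Phi>: "\<And>t. t \<ge> 1 \<Longrightarrow> linear (\<Phi> t) \<and> bij (\<Phi> t)"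
    and conv: "\<And>X Y. ((\<lambda>t. inv_into UNIV (\<Phi> t) (B0 (\<Phi> t X) (\<Phi> t Y))) \<longlongrightarrow> B1 X Y) at_top"
    using lim unfolding contraction_limit_def by blast
  let ?tr = "\<lambda>t. \<Sum>b\<in>Basis. inv_into UNIV (\<Phi> t) (B0 (\<Phi> t X) (\<Phi> t b)) \<bullet> b"
  have "(?tr \<longlongrightarrow> (\<Sum>b\<in>Basis. B1 X b \<bullet> b)) at_top"
    by (intro tendsto_sum tendsto_inner conv tendsto_const)
  moreover have "\<forall>\<^sub>F t in at_top. ?tr t = 0"
    using eventually_ge_at_top[of "1::real"]
  proof (rule eventually_mono)
    fix t :: real assume "t \<ge> 1"
    hence "linear (\<Phi> t)" "bij (\<Phi> t)" using \<Phi> by auto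
    moreover from this have "\<forall>y. \<Phi> t (inv_into UNIV (\<Phi> t) y) = y"
      by (simp add: bij_is_surj surj_f_inv_f)
    ultimately show "?tr t = 0"
      using trace_similarity_invariant[OF _ linear_inv_bij lin] uni
      by (simp add: unimodular_def ad_trace_def)
  qed
  hence "(?tr \<longlongrightarrow> 0) at_top" by (rule tendsto_eventually)
  ultimately show "(\<Sum>b\<in>Basis. B1 X b \<bullet> b) = 0"
    using tendsto_unique[OF trivial_limit_at_top_linorder] by blast
qed

lemma unimodular_isomorphic:
  fixes f :: "'a::euclidean_space \<Rightarrow> 'b::euclidean_space"
  assumes uni: "unimodular B1" and L: "\<And>x. linear (L x)"
    and f: "linear f" "bij f" and iso: "\<And>X Y. f (B1 X Y) = L (f X) (f Y)"
  shows "unimodular L"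
  unfolding unimodular_def ad_trace_def
proof
  fix x
  have fi: "f (inv_into UNIV f y) = y" "inv_into UNIV f (f z) = z" for y z
    using f(2) by (simp_all add: bij_is_surj surj_f_inv_f bij_is_inj)
  have B1: "B1 X = inv_into UNIV f \<circ> L (f X) \<circ> f" for X
    by (rule ext) (metis comp_apply fi(2) iso)
  have linear_B1: "linear (B1 X)" for X
    unfolding B1 by (intro linear_compose f(1) L linear_inv_bij[OF f])
  have "(\<Sum>e\<in>Basis. L x e \<bullet> e) = (\<Sum>e\<in>Basis. f (B1 (inv_into UNIV f x) (inv_into UNIV f e)) \<bullet> e)"
    using iso fi by simp
  also have "\<dots> = (\<Sum>a\<in>Basis. B1 (inv_into UNIV f x) a \<bullet> a)"
    by (rule trace_similarity_invariant[OF linear_inv_bij[OF f] f(1) linear_B1]) (simp add: fi)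
  finally show "(\<Sum>e\<in>Basis. L x e \<bullet> e) = 0" using uni by (simp add: unimodular_def ad_trace_def)
qed

lemma unimodular_contraction:
  assumes "lie_algebra B0" "unimodular B0" "\<And>x. linear (L x)" "is_contraction_of L B0"
  shows "unimodular L"
  using assms unimodular_isomorphic unimodular_contraction_limit lie_algebra_linear_right
  unfolding is_contraction_of_def by metis

section \<open>The algebras \<open>L\<^sub>8\<close>\<close>

lemma idx8_inj: "inj_on idx8 {1..8}"
proof (rule inj_onI)
  fix a b assume ab: "a \<in> {1..8::nat}" "b \<in> {1..8::nat}" "idx8 a = idx8 b"
  have "(of_nat (a - 1) :: 8) = of_nat (b - 1)" using ab(3) unfolding idx8_def .
  moreover have "(of_nat k :: 8) = Abs_bit0 (int k)" if "k < 8" for k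
    using that by (simp add: bit0.of_nat_eq)
  moreover have "a - 1 < 8" "b - 1 < 8" using ab(1,2) by auto
  ultimately have "Abs_bit0 (int (a - 1)) = (Abs_bit0 (int (b - 1)) :: 8)" by metis
  moreover have "inj_on (Abs_bit0 :: int \<Rightarrow> 8) {0..<8}" using inj_on_Abs_bit0[where 'a=4] by simp
  ultimately have "int (a - 1) = int (b - 1)" using ab(1,2) unfolding inj_on_def by auto
  thus "a = b" using ab(1,2) by auto
qed

lemma idx8_bij: "idx8 ` {1..8} = UNIV"
proof -
  have "card (idx8 ` {1..8}) = 8" using card_image[OF idx8_inj] by simp
  also have "\<dots> = card (UNIV :: 8 set)" by simp
  finally show ?thesis by (simp add: card_subset_eq)
qed

lemma idx8_eq: "i \<in> {1..8} \<Longrightarrow> j \<in> {1..8} \<Longrightarrow> idx8 i = idx8 j \<longleftrightarrow> i = j"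
  using idx8_inj unfolding inj_on_def by blast

lemma sum_Basis_vec: "(\<Sum>e\<in>(Basis :: (real^'n) set). F e) = (\<Sum>i\<in>UNIV. F (axis i 1))"
proof -
  have Basis_eq: "(Basis :: (real^'n) set) = range (\<lambda>i. axis i 1)" by (auto simp: Basis_vec_def)
  show ?thesis unfolding Basis_eq by (simp add: sum.reindex inj_on_def axis_eq_axis)
qed

lemma ad_trace_sc_bracket_X8:
  "ad_trace (sc_bracket l) (axis (idx8 8) 1) = (\<Sum>k\<in>{1..8}. sc_full l 8 k k)"
proof -
  let ?x = "axis (idx8 8) 1 :: real^8"
  have "ad_trace (sc_bracket l) ?x = (\<Sum>m\<in>UNIV. sc_bracket l ?x (axis m 1) $ m)"
    by (simp add: ad_trace_def sum_Basis_vec inner_axis)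
  also have "\<dots> = (\<Sum>k'\<in>{1..8}. sc_bracket l ?x (axis (idx8 k') 1) $ idx8 k')"
    by (subst idx8_bij[symmetric], subst sum.reindex[OF idx8_inj]) simp
  also have "\<dots> = (\<Sum>k'\<in>{1..8}. sc_full l 8 k' k')"
  proof (rule sum.cong, simp)
    fix k' assume k': "k' \<in> {1..8::nat}"
    have "sc_bracket l ?x (axis (idx8 k') 1) $ idx8 k' =
        (\<Sum>i\<in>{1..8}. \<Sum>j\<in>{1..8}. \<Sum>k\<in>{1..8}. if k = k' \<and> i = 8 \<and> j = k' then sc_full l i j k else 0)"
      unfolding sc_bracket_def vec_lambda_beta using k' by (intro sum.cong refl) (auto simp: axis_def idx8_eq)
    also have "\<dots> = sc_full l 8 k' k'"
    proof -
      have a: "(\<Sum>k\<in>{1..8}. if k = k' \<and> i = 8 \<and> j = k' then sc_full l i j k else 0) =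
          (if i = 8 \<and> j = k' then sc_full l i j k' else 0)" for i j
      proof (cases "i = 8 \<and> j = k'")
        case True thus ?thesis using k' by (simp add: sum.delta)
      next
        case False thus ?thesis by (auto intro!: sum.neutral)
      qed
      have b: "(\<Sum>j\<in>{1..8}. if i = 8 \<and> j = k' then sc_full l i j k' else 0) =
          (if i = 8 then sc_full l i k' k' else 0)" for i
      proof (cases "i = 8")
        case True thus ?thesis using k' by (simp add: sum.delta)
      next
        case False thus ?thesis by (auto intro!: sum.neutral)
      qed
      show ?thesis unfolding a b by (simp add: sum.delta)
    qed
    finally show "sc_bracket l ?x (axis (idx8 k') 1) $ idx8 k' = sc_full l 8 k' k'" .
  qed
  finally show ?thesis .
qed

lemma linear_sc_bracket: "linear (sc_bracket l x)"
proof (rule linearI)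
  fix y z show "sc_bracket l x (y + z) = sc_bracket l x y + sc_bracket l x z"
    unfolding sc_bracket_def
    by (simp add: Finite_Cartesian_Product.vec_eq_iff sum.distrib[symmetric] algebra_simps
        if_distrib cong: if_cong)
next
  fix r y show "sc_bracket l x (r *\<^sub>R y) = r *\<^sub>R sc_bracket l x y"
    unfolding sc_bracket_def
    by (simp add: Finite_Cartesian_Product.vec_eq_iff sum_distrib_left algebra_simps if_distrib
        cong: if_cong)
qed

lemma not_contraction_of_sc_bracket:
  fixes B :: "'a::euclidean_space \<Rightarrow> 'a \<Rightarrow> 'a"
  assumes ss: "semisimple B" and tr: "(\<Sum>k\<in>{1..8}. sc_full l 8 k k) \<noteq> 0"
  shows "\<not> is_contraction_of (sc_bracket l) B"
proof
  assume "is_contraction_of (sc_bracket l) B"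
  hence "unimodular (sc_bracket l)"
    using ss unimodular_contraction[OF _ semisimple_unimodular[OF ss] linear_sc_bracket]
    by (simp add: semisimple_def)
  thus False using tr ad_trace_sc_bracket_X8[of l] unfolding unimodular_def by metis
qed

lemma atLeastAtMost_1_8: "{1..8::nat} = {1,2,3,4,5,6,7,8}"
  by auto

lemma sum_sc_full_constsA: "(\<Sum>k\<in>{1..8}. sc_full (constsA @ l) 8 k k) = (\<Sum>k\<in>{1..8}. sc_full l 8 k k)"
  unfolding atLeastAtMost_1_8 by (simp add: sc_full_def sc_def constsA_def)

lemma sum_sc_full_constsB: "(\<Sum>k\<in>{1..8}. sc_full (constsB @ l) 8 k k) = (\<Sum>k\<in>{1..8}. sc_full l 8 k k)"
  unfolding atLeastAtMost_1_8 by (simp add: sc_full_def sc_def constsB_def)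

theorem lemma1:
  fixes B :: "'a::euclidean_space \<Rightarrow> 'a \<Rightarrow> 'a"
  assumes "semisimple B"
  shows "\<not> is_contraction_of L8_3 B \<and>
         (\<forall>p. p \<noteq> 0 \<longrightarrow> \<not> is_contraction_of (L8_4 p) B) \<and>
         \<not> is_contraction_of L8_16 B \<and>
         (\<forall>p. p \<noteq> -1 \<longrightarrow> \<not> is_contraction_of (L8_17 p) B) \<and>
         (\<forall>p. p \<noteq> 0 \<longrightarrow> \<not> is_contraction_of (L8_18 p) B)"
  unfolding L8_3_def L8_4_def L8_16_def L8_17_def L8_18_def
  by (intro conjI allI impI not_contraction_of_sc_bracket[OF assms],
      unfold sum_sc_full_constsA sum_sc_full_constsB, unfold atLeastAtMost_1_8)
    (simp_all add: sc_full_def sc_def)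

end
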